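(* Suppose $p,q\in[1,\infty]$, $w$ is a positive measurable function on $\mathbb R^n$, and there exists a constant $C$ such that $\|w\widehat f\|_{L^q(\mathbb R^n)}\le C\|wf\|_{L^p(\mathbb R^n)}$ whenever $f$ is integrable and $wf\in L^p(\mathbb R^n)$. Then $1\le p\le 2$, $q=p'$ (where $1/p+1/p'=1$), and there exist positive real numbers $m$ and $M$ such that $m\le w(x)\le M$ for almost every $x\in\mathbb R^n$.
   Context: The Fourier transform of an integrable $f\colon\mathbb R^n\to\mathbb C$ is $\widehat f(x)=\int_{\mathbb R^n}e^{-2\pi i x\cdot t}f(t)\,dt$. *)

theory Defs
  imports "HOL-Analysis.Analysis" "HOL-Probability.Essential_Supremum"
begin

definition fourier :: "('a::euclidean_space \<Rightarrow> complex) \<Rightarrow> 'a \<Rightarrow> complex" where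
  "fourier f x = (\<integral>t. cis (- 2 * pi * (x \<bullet> t)) * f t \<partial>lebesgue)"

definition Lp_norm :: "ennreal \<Rightarrow> ('a::euclidean_space \<Rightarrow> 'b::real_normed_vector) \<Rightarrow> ennreal" where
  "Lp_norm p g =
     (if p = \<infinity> then esssup lebesgue (\<lambda>x. ennreal (norm (g x)))
      else (let I = (\<integral>\<^sup>+ x. ennreal (norm (g x) powr enn2real p) \<partial>lebesgue)
            in if I = \<infinity> then \<infinity> else ennreal (enn2real I powr (1 / enn2real p))))"

end

theory Submission
  imports Defs
begin

lemma sigma_finite_lebesgue: "sigma_finite_measure (lebesgue :: 'a::euclidean_space measure)"
proof (rule sigma_finite_measure.intro, intro exI conjI)
  show "\<Union> (range (\<lambda>n::nat. ball (0::'a) (real n))) = space lebesgue"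
    by (auto simp: reals_Archimedean2)
  show "\<forall>A\<in>range (\<lambda>n::nat. ball (0::'a) (real n)). emeasure lebesgue A \<noteq> \<infinity>"
    using emeasure_lborel_ball_finite by (auto simp: less_top)
qed auto

lemma borel_measurable_lebesgue_continuous:
  "continuous_on UNIV f \<Longrightarrow> f \<in> borel_measurable (lebesgue :: 'a::euclidean_space measure)"
  using measurable_comp[OF id_borel_measurable_lebesgue borel_measurable_continuous_onI]
  by (simp add: comp_def)

lemma fourier_measurable:
  fixes g :: "'a::euclidean_space \<Rightarrow> complex"
  assumes g: "g \<in> borel_measurable lebesgue"
  shows "fourier g \<in> borel_measurable lebesgue"
proof -
  interpret sigma_finite_measure "lebesgue :: 'a measure" by (rule sigma_finite_lebesgue)
  let ?L2 = "lebesgue \<Otimes>\<^sub>M lebesgue :: ('a \<times> 'a) measure"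
  have fst: "fst \<in> borel_measurable ?L2" and snd: "snd \<in> borel_measurable ?L2"
    using measurable_comp[OF measurable_fst id_borel_measurable_lebesgue]
      measurable_comp[OF measurable_snd id_borel_measurable_lebesgue] by (simp_all add: comp_def)
  have "(\<lambda>r::real. cis (- 2 * pi * r)) \<in> borel_measurable borel"
    by (intro borel_measurable_continuous_onI continuous_intros)
  from measurable_compose[OF borel_measurable_inner[OF fst snd] this]
  have "(\<lambda>(x, t). cis (- 2 * pi * (x \<bullet> t)) * g t) \<in> borel_measurable ?L2"
    using borel_measurable_times[OF _ measurable_compose[OF measurable_snd g]]
    by (simp add: case_prod_beta')
  then show ?thesis
    unfolding fourier_def[abs_def] by (rule borel_measurable_lebesgue_integral)
qed

lemma fourier_cmult: "fourier (\<lambda>t. c * g t) x = c * fourier g x"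
  unfolding fourier_def by (subst mult.left_commute) (rule integral_mult_right_zero)

lemma fourier_sum:
  fixes g :: "'i \<Rightarrow> 'a::euclidean_space \<Rightarrow> complex"
  assumes g: "\<And>k. k \<in> I \<Longrightarrow> integrable lebesgue (g k)"
  shows "fourier (\<lambda>t. \<Sum>k\<in>I. g k t) x = (\<Sum>k\<in>I. fourier (g k) x)"
proof -
  have cis: "(\<lambda>t. cis (- 2 * pi * (x \<bullet> t))) \<in> borel_measurable lebesgue"
    by (intro borel_measurable_lebesgue_continuous continuous_intros)
  have "integrable lebesgue (\<lambda>t. cis (- 2 * pi * (x \<bullet> t)) * g k t)" if "k \<in> I" for k
    using g[OF that] borel_measurable_times[OF cis borel_measurable_integrable[OF g[OF that]]]
    by (rule Bochner_Integration.integrable_bound) (simp add: norm_mult)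
  then show ?thesis
    unfolding fourier_def sum_distrib_left by (rule Bochner_Integration.integral_sum)
qed

definition modulated_indicator :: "'a::euclidean_space \<Rightarrow> 'a set \<Rightarrow> 'a \<Rightarrow> complex" where
  "modulated_indicator \<xi> E t = cis (2 * pi * (\<xi> \<bullet> t)) * indicator E t"

lemma norm_modulated_indicator: "norm (modulated_indicator \<xi> E t) = indicator E t"
  by (simp add: modulated_indicator_def norm_mult indicator_def)

lemma modulated_indicator_measurable:
  assumes "E \<in> sets lebesgue"
  shows "modulated_indicator \<xi> E \<in> borel_measurable lebesgue"
proof -
  have "(\<lambda>t. cis (2 * pi * (\<xi> \<bullet> t))) \<in> borel_measurable lebesgue"
    by (intro borel_measurable_lebesgue_continuous continuous_intros)
  moreover have "(indicator E :: _ \<Rightarrow> complex) \<in> borel_measurable lebesgue"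
    using assms by (rule borel_measurable_indicator)
  ultimately show ?thesis
    unfolding modulated_indicator_def[abs_def] by (rule borel_measurable_times)
qed

lemma integrable_bounded_mult_indicator:
  fixes g :: "'a::euclidean_space \<Rightarrow> complex"
  assumes E: "E \<in> lmeasurable" and g: "g \<in> borel_measurable lebesgue" "\<And>t. norm (g t) \<le> 1"
  shows "integrable lebesgue (\<lambda>t. g t * indicator E t)"
proof (rule Bochner_Integration.integrable_bound)
  show "integrable lebesgue (indicator E :: _ \<Rightarrow> real)"
    using E by (simp add: lmeasurable_iff_integrable)
  show "(\<lambda>t. g t * indicator E t) \<in> borel_measurable lebesgue"
    using E g(1) by (intro borel_measurable_times borel_measurable_indicator fmeasurableD)
  show "AE t in lebesgue. norm (g t * indicator E t) \<le> norm (indicator E t :: real)"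
    using g(2) by (simp add: indicator_def norm_mult)
qed

lemma integrable_modulated_indicator:
  "E \<in> lmeasurable \<Longrightarrow> integrable lebesgue (modulated_indicator \<xi> E)"
  unfolding modulated_indicator_def[abs_def]
  by (intro integrable_bounded_mult_indicator borel_measurable_lebesgue_continuous continuous_intros) simp_all

lemma cos_ge_half:
  assumes "\<bar>y\<bar> \<le> pi / 4"
  shows "1 / 2 \<le> cos y"
proof -
  have "cos (pi / 4) \<le> cos \<bar>y\<bar>"
    by (rule cos_monotone_0_pi_le) (use assms in auto)
  then have "sqrt 2 / 2 \<le> cos y"
    by (simp add: cos_45 abs_if split: if_splits)
  moreover have "1 \<le> sqrt (2::real)"
    by simp
  ultimately show ?thesis
    by linarith
qed

text \<open>On \<open>E\<close> the phase of the integrand differs by at most \<open>\<pi>/4\<close> from its value at the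
  centre \<open>c\<close>, so after rotating by that value the real part of the integrand is at least \<open>1/2\<close>.\<close>
lemma fourier_modulated_indicator_ge:
  fixes E :: "'a::euclidean_space set"
  assumes E: "E \<in> lmeasurable" "E \<subseteq> cball c r" and r: "0 < r" and x: "dist x \<xi> \<le> 1 / (8 * r)"
  shows "measure lebesgue E / 2 \<le> norm (fourier (modulated_indicator \<xi> E) x)"
proof -
  define v where "v = x - \<xi>"
  define G where "G t = cis (- 2 * pi * (v \<bullet> (t - c))) * indicator E t" for t
  have G: "integrable lebesgue G"
    unfolding G_def
    by (intro integrable_bounded_mult_indicator[OF E(1)] borel_measurable_lebesgue_continuous
        continuous_intros) simp_all
  have "cis (- 2 * pi * (x \<bullet> t)) * cis (2 * pi * (\<xi> \<bullet> t))
      = cis (- 2 * pi * (v \<bullet> c)) * cis (- 2 * pi * (v \<bullet> (t - c)))" for t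
    by (simp add: cis_mult v_def algebra_simps)
  then have "cis (- 2 * pi * (x \<bullet> t)) * modulated_indicator \<xi> E t = cis (- 2 * pi * (v \<bullet> c)) * G t" for t
    by (simp add: modulated_indicator_def G_def mult.assoc)
  then have "fourier (modulated_indicator \<xi> E) x = cis (- 2 * pi * (v \<bullet> c)) * integral\<^sup>L lebesgue G"
    by (simp add: fourier_def)
  then have "norm (fourier (modulated_indicator \<xi> E) x) = norm (integral\<^sup>L lebesgue G)"
    by (simp add: norm_mult)
  also have "\<dots> \<ge> (\<integral>t. Re (G t) \<partial>lebesgue)"
    using complex_Re_le_cmod[of "integral\<^sup>L lebesgue G"] G by simp
  also have "(\<integral>t. Re (G t) \<partial>lebesgue) \<ge> (\<integral>t. indicator E t / 2 \<partial>lebesgue)"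
  proof (rule integral_mono)
    show "integrable lebesgue (\<lambda>t. indicator E t / 2 :: real)"
      using E by (simp add: lmeasurable_iff_integrable)
    show "integrable lebesgue (\<lambda>t. Re (G t))"
      using G by (rule integrable_Re)
    fix t
    show "indicator E t / 2 \<le> Re (G t)"
    proof (cases "t \<in> E")
      case True
      then have "norm (t - c) \<le> r"
        using E(2) by (auto simp: dist_norm norm_minus_commute)
      moreover have "norm v \<le> 1 / (8 * r)"
        using x by (simp add: v_def dist_norm)
      ultimately have "norm v * norm (t - c) \<le> 1 / (8 * r) * r"
        using r by (intro mult_mono) auto
      then have "\<bar>v \<bullet> (t - c)\<bar> \<le> 1 / 8"
        using Cauchy_Schwarz_ineq2[of v "t - c"] r by simp
      then have "\<bar>- 2 * pi * (v \<bullet> (t - c))\<bar> \<le> pi / 4"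
        by (simp add: abs_mult)
      then show ?thesis
        using True cos_ge_half by (simp add: G_def)
    qed (simp add: G_def)
  qed
  finally show ?thesis by simp
qed

definition inv_exponent :: "ennreal \<Rightarrow> real" where
  "inv_exponent p = (if p = \<infinity> then 0 else 1 / enn2real p)"

lemma enn2real_ge_1: "1 \<le> p \<Longrightarrow> p \<noteq> \<infinity> \<Longrightarrow> 1 \<le> enn2real p"
  using enn2real_mono[of 1 p] by (simp add: less_top)

lemma inv_exponent_nonneg: "0 \<le> inv_exponent p"
  by (simp add: inv_exponent_def)

lemma inv_exponent_le_1: "1 \<le> p \<Longrightarrow> inv_exponent p \<le> 1"
  using enn2real_ge_1[of p] by (auto simp: inv_exponent_def)

lemma ennreal_inv_exponent:
  assumes "1 \<le> p"
  shows "1 / p = ennreal (inv_exponent p)"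
proof (cases "p = \<infinity>")
  case False
  then have "1 / p = ennreal 1 / ennreal (enn2real p)"
    by (simp add: less_top)
  also have "\<dots> = ennreal (1 / enn2real p)"
    using enn2real_ge_1[OF assms False] by (intro divide_ennreal) auto
  finally show ?thesis
    using False by (simp add: inv_exponent_def)
qed (simp add: inv_exponent_def)

lemma le_2_of_inv_exponent_ge_half:
  assumes "1 \<le> p" "1 / 2 \<le> inv_exponent p"
  shows "p \<le> 2"
proof -
  have "p \<noteq> \<infinity>"
    using assms(2) by (auto simp: inv_exponent_def)
  then have "1 \<le> enn2real p"
    by (rule enn2real_ge_1[OF assms(1)])
  with \<open>p \<noteq> \<infinity>\<close> assms(2) have "ennreal (enn2real p) \<le> ennreal 2"
    by (intro ennreal_leI) (simp add: inv_exponent_def field_simps)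
  with \<open>p \<noteq> \<infinity>\<close> show ?thesis
    by (simp add: less_top)
qed

lemma Lp_norm_le_of_nn_integral_le:
  assumes p: "1 \<le> p" "p \<noteq> \<infinity>" and "0 \<le> Y"
    and le: "(\<integral>\<^sup>+x. ennreal (norm (h x) powr enn2real p) \<partial>lebesgue) \<le> ennreal Y"
  shows "Lp_norm p h \<le> ennreal (Y powr (1 / enn2real p))"
proof -
  let ?I = "\<integral>\<^sup>+x. ennreal (norm (h x) powr enn2real p) \<partial>lebesgue"
  have "?I \<noteq> \<infinity>" and "enn2real ?I \<le> Y"
    using le \<open>0 \<le> Y\<close> by (auto simp: top_unique enn2real_leI)
  then show ?thesis
    using p enn2real_ge_1[OF p] by (auto simp: Lp_norm_def Let_def intro!: ennreal_leI powr_mono2)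
qed

lemma Lp_norm_ge_of_nn_integral_ge:
  assumes p: "1 \<le> p" "p \<noteq> \<infinity>" and "0 \<le> Y"
    and ge: "ennreal Y \<le> (\<integral>\<^sup>+x. ennreal (norm (h x) powr enn2real p) \<partial>lebesgue)"
  shows "ennreal (Y powr (1 / enn2real p)) \<le> Lp_norm p h"
proof -
  let ?I = "\<integral>\<^sup>+x. ennreal (norm (h x) powr enn2real p) \<partial>lebesgue"
  have "Y \<le> enn2real ?I" if "?I \<noteq> \<infinity>"
    using enn2real_mono[OF ge] that \<open>0 \<le> Y\<close> by (simp add: less_top)
  then show ?thesis
    using p enn2real_ge_1[OF p] \<open>0 \<le> Y\<close>
    by (auto simp: Lp_norm_def Let_def intro!: ennreal_leI powr_mono2)
qed

lemma Lp_norm_top_le: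
  assumes "h \<in> borel_measurable lebesgue" "AE x in lebesgue. norm (h x) \<le> K"
  shows "Lp_norm \<infinity> h \<le> ennreal K"
  using assms unfolding Lp_norm_def by (auto intro: ennreal_leI elim!: eventually_mono)

lemma Lp_norm_top_ge:
  assumes F: "F \<in> sets lebesgue" "F \<notin> null_sets lebesgue" and "\<And>x. x \<in> F \<Longrightarrow> c \<le> norm (h x)"
  shows "ennreal c \<le> Lp_norm \<infinity> h"
proof (rule ccontr)
  let ?S = "esssup lebesgue (\<lambda>x. ennreal (norm (h x)))"
  assume "\<not> ennreal c \<le> Lp_norm \<infinity> h"
  then have "?S < ennreal c"
    by (simp add: Lp_norm_def not_le)
  have "AE x in lebesgue. x \<notin> F"
    using esssup_AE[of "\<lambda>x. ennreal (norm (h x))" lebesgue]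
  proof eventually_elim
    case (elim x)
    show ?case
    proof
      assume "x \<in> F"
      then have "ennreal c \<le> ennreal (norm (h x))"
        by (intro ennreal_leI assms(3))
      then show False
        using elim \<open>?S < ennreal c\<close> by (meson not_le order_trans)
    qed
  qed
  then show False
    using F by (simp add: AE_iff_null_sets)
qed

lemma Lp_norm_le_indicator_bound:
  assumes p: "1 \<le> p" and h: "h \<in> borel_measurable lebesgue"
    and E: "E \<in> lmeasurable" "0 < measure lebesgue E" and "0 \<le> K"
    and bound: "AE x in lebesgue. norm (h x) \<le> K * indicator E x"
  shows "Lp_norm p h \<le> ennreal (K * measure lebesgue E powr inv_exponent p)"
proof (cases "p = \<infinity>")
  case True
  have "AE x in lebesgue. norm (h x) \<le> K"
    using bound by eventually_elim (use \<open>0 \<le> K\<close> in \<open>auto simp: indicator_def of_bool_def split: if_splits\<close>)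
  then show ?thesis
    using True E Lp_norm_top_le[OF h] by (simp add: inv_exponent_def)
next
  case False
  let ?p = "enn2real p"
  have p1: "1 \<le> ?p"
    using enn2real_ge_1[OF p False] .
  have "(\<integral>\<^sup>+x. ennreal (norm (h x) powr ?p) \<partial>lebesgue) \<le> (\<integral>\<^sup>+x. ennreal (K powr ?p) * indicator E x \<partial>lebesgue)"
    using bound
    by (intro nn_integral_mono_AE, elim eventually_mono)
       (use p1 in \<open>auto simp: indicator_def intro!: ennreal_leI powr_mono2\<close>)
  also have "\<dots> = ennreal (K powr ?p * measure lebesgue E)"
    using E by (simp add: nn_integral_cmult_indicator fmeasurableD emeasure_eq_measure2 ennreal_mult)
  finally have "Lp_norm p h \<le> ennreal ((K powr ?p * measure lebesgue E) powr (1 / ?p))"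
    using E(2) by (intro Lp_norm_le_of_nn_integral_le[OF p False]) auto
  also have "(K powr ?p * measure lebesgue E) powr (1 / ?p) = K * measure lebesgue E powr inv_exponent p"
    using False p1 \<open>0 \<le> K\<close> E(2) by (simp add: powr_mult powr_powr inv_exponent_def)
  finally show ?thesis .
qed

lemma Lp_norm_ge_on_set:
  assumes q: "1 \<le> q" and F: "F \<in> sets lebesgue" and "0 \<le> c"
    and bound: "\<And>x. x \<in> F \<Longrightarrow> c \<le> norm (h x)"
  shows "ennreal (c * measure lebesgue F powr inv_exponent q) \<le> Lp_norm q h"
proof (cases "measure lebesgue F = 0")
  case False
  then have Fnn: "F \<notin> null_sets lebesgue" and Ffin: "emeasure lebesgue F < \<infinity>"
    by (auto simp: measure_def null_setsD1) (metis enn2real_top less_top)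
  show ?thesis
  proof (cases "q = \<infinity>")
    case True
    then show ?thesis
      using False Lp_norm_top_ge[OF F Fnn bound] by (simp add: inv_exponent_def)
  next
    case qfin: False
    let ?q = "enn2real q"
    have q1: "1 \<le> ?q"
      using enn2real_ge_1[OF q qfin] .
    have "ennreal (c powr ?q * measure lebesgue F) = (\<integral>\<^sup>+x. ennreal (c powr ?q) * indicator F x \<partial>lebesgue)"
      using F Ffin by (simp add: nn_integral_cmult_indicator emeasure_eq_ennreal_measure ennreal_mult)
    also have "\<dots> \<le> (\<integral>\<^sup>+x. ennreal (norm (h x) powr ?q) \<partial>lebesgue)"
      using bound \<open>0 \<le> c\<close> q1
      by (intro nn_integral_mono) (auto simp: indicator_def intro!: ennreal_leI powr_mono2)
    finally have "ennreal ((c powr ?q * measure lebesgue F) powr (1 / ?q)) \<le> Lp_norm q h"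
      by (intro Lp_norm_ge_of_nn_integral_ge[OF q qfin]) auto
    also have "(c powr ?q * measure lebesgue F) powr (1 / ?q) = c * measure lebesgue F powr inv_exponent q"
      using qfin q1 \<open>0 \<le> c\<close> by (simp add: powr_mult powr_powr inv_exponent_def)
    finally show ?thesis .
  qed
qed simp

lemma Lp_norm_weighted_ge:
  assumes q: "1 \<le> q" "q \<noteq> \<infinity>" and h: "h \<in> borel_measurable lebesgue"
    and "0 < m" and w: "AE x in lebesgue. m \<le> w x" and "0 \<le> Y"
    and Y: "ennreal Y \<le> (\<integral>\<^sup>+x. ennreal (norm (h x) powr enn2real q) \<partial>lebesgue)"
  shows "ennreal (m * Y powr (1 / enn2real q)) \<le> Lp_norm q (\<lambda>x. w x *\<^sub>R h x)"
proof -
  let ?s = "enn2real q"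
  have "1 \<le> ?s"
    using enn2real_ge_1[OF q] .
  have "ennreal (m powr ?s * Y) = ennreal (m powr ?s) * ennreal Y"
    using \<open>0 \<le> Y\<close> by (simp add: ennreal_mult)
  also have "\<dots> \<le> ennreal (m powr ?s) * (\<integral>\<^sup>+x. ennreal (norm (h x) powr ?s) \<partial>lebesgue)"
    using Y by (rule mult_left_mono) simp
  also have "\<dots> = (\<integral>\<^sup>+x. ennreal (m powr ?s) * ennreal (norm (h x) powr ?s) \<partial>lebesgue)"
    using h by (intro nn_integral_cmult[symmetric]) measurable
  also have "\<dots> \<le> (\<integral>\<^sup>+x. ennreal (norm (w x *\<^sub>R h x) powr ?s) \<partial>lebesgue)"
    using w
  proof (intro nn_integral_mono_AE, elim eventually_mono)
    fix x
    assume "m \<le> w x"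
    then have "(m * norm (h x)) powr ?s \<le> (\<bar>w x\<bar> * norm (h x)) powr ?s"
      using \<open>0 < m\<close> \<open>1 \<le> ?s\<close> by (intro powr_mono2 mult_right_mono) auto
    then show "ennreal (m powr ?s) * ennreal (norm (h x) powr ?s) \<le> ennreal (norm (w x *\<^sub>R h x) powr ?s)"
      using \<open>0 < m\<close> by (simp add: powr_mult ennreal_mult[symmetric])
  qed
  finally have "ennreal ((m powr ?s * Y) powr (1 / ?s)) \<le> Lp_norm q (\<lambda>x. w x *\<^sub>R h x)"
    using \<open>0 \<le> Y\<close> \<open>0 < m\<close> by (intro Lp_norm_ge_of_nn_integral_ge[OF q]) auto
  also have "(m powr ?s * Y) powr (1 / ?s) = m * Y powr (1 / ?s)"
    using \<open>0 \<le> Y\<close> \<open>0 < m\<close> \<open>1 \<le> ?s\<close> by (simp add: powr_mult powr_powr)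
  finally show ?thesis .
qed

lemma not_null_sets_Int_UN:
  assumes "S \<notin> null_sets M" "\<And>k. T k \<in> sets M" "S \<subseteq> (\<Union>k. T k)"
  shows "\<exists>k::nat. S \<inter> T k \<notin> null_sets M"
proof (rule ccontr)
  assume "\<not> ?thesis"
  then have "(\<Union>k. S \<inter> T k) \<in> null_sets M"
    by (intro null_sets_UN) auto
  moreover have "(\<Union>k. S \<inter> T k) = S"
    using assms(3) by blast
  ultimately show False
    using assms(1) by simp
qed

lemma measure_pos_of_not_null_sets:
  "S \<in> lmeasurable \<Longrightarrow> S \<notin> null_sets lebesgue \<Longrightarrow> 0 < measure lebesgue S"
  using emeasure_eq_measure2[of S lebesgue] measure_nonneg[of lebesgue S]
  by (auto simp: null_sets_def fmeasurableD order_le_less)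

lemma measure_ball_pos: "0 < r \<Longrightarrow> 0 < measure lebesgue (ball (x::'a::euclidean_space) r)"
  by (simp add: content_ball_pos)

lemma positive_lower_density_point:
  fixes S :: "'a::euclidean_space set"
  assumes S: "S \<in> sets lebesgue" "S \<notin> null_sets lebesgue"
  obtains x and r e :: real where "0 < r" "0 < e"
    "\<And>d. 0 < d \<Longrightarrow> d \<le> r \<Longrightarrow> e * measure lebesgue (ball x d) \<le> measure lebesgue (S \<inter> ball x d)"
proof -
  have "\<not> negligible S"
    using S(2) by (simp add: negligible_iff_null_sets)
  then obtain x r e where "x \<in> S" "0 < r" "0 < e" and sparse: "\<not> (\<exists>d. 0 < d \<and> d \<le> r \<and>
      (\<exists>U. S \<inter> ball x d \<subseteq> U \<and> U \<in> lmeasurable \<and> measure lebesgue U < e * measure lebesgue (ball x d)))"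
    unfolding negligible_eq_zero_density by blast
  show ?thesis
  proof (rule that[OF \<open>0 < r\<close> \<open>0 < e\<close>], rule ccontr)
    fix d
    assume "0 < d" "d \<le> r" "\<not> e * measure lebesgue (ball x d) \<le> measure lebesgue (S \<inter> ball x d)"
    moreover have "S \<inter> ball x d \<in> lmeasurable"
      using S(1) by (intro fmeasurableI2[OF lmeasurable_ball]) auto
    ultimately have "\<exists>U. S \<inter> ball x d \<subseteq> U \<and> U \<in> lmeasurable \<and>
        measure lebesgue U < e * measure lebesgue (ball x d)"
      by (intro exI[of _ "S \<inter> ball x d"]) auto
    then show False
      using sparse \<open>0 < d\<close> \<open>d \<le> r\<close> by blast
  qed
qed

text \<open>The Vitali covering theorem turns a density bound on small balls into a global one.\<close>
lemma measure_le_of_relative_density_le: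
  fixes B U :: "'a::euclidean_space set"
  assumes B: "B \<in> sets lebesgue" and U: "open U" "B \<subseteq> U" "U \<in> lmeasurable" and "0 \<le> \<theta>"
    and dens: "\<And>x r. x \<in> B \<Longrightarrow> 0 < r \<Longrightarrow>
      \<exists>d. 0 < d \<and> d \<le> r \<and> measure lebesgue (B \<inter> ball x d) \<le> \<theta> * measure lebesgue (ball x d)"
  shows "measure lebesgue B \<le> \<theta> * measure lebesgue U"
proof -
  define K where "K = {(x, d). x \<in> B \<and> 0 < d \<and> ball x d \<subseteq> U \<and>
    measure lebesgue (B \<inter> ball x d) \<le> \<theta> * measure lebesgue (ball x d)}"
  have "\<exists>i. i \<in> K \<and> x \<in> ball (fst i) (snd i) \<and> snd i < r" if "x \<in> B" "0 < r" for x r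
  proof -
    have "x \<in> U"
      using U(2) that(1) by blast
    then obtain \<rho> where "0 < \<rho>" "ball x \<rho> \<subseteq> U"
      using U(1) openE by metis
    moreover obtain d where "0 < d" "d \<le> min \<rho> (r / 2)"
      "measure lebesgue (B \<inter> ball x d) \<le> \<theta> * measure lebesgue (ball x d)"
      using dens[OF \<open>x \<in> B\<close>, of "min \<rho> (r / 2)"] \<open>0 < \<rho>\<close> \<open>0 < r\<close> by auto
    ultimately show ?thesis
      using that by (intro exI[of _ "(x, d)"]) (auto simp: K_def)
  qed
  then obtain I where I: "countable I" "I \<subseteq> K"
    "pairwise (\<lambda>i j. disjnt (ball (fst i) (snd i)) (ball (fst j) (snd j))) I"
    "negligible (B - (\<Union>i\<in>I. ball (fst i) (snd i)))"
    by (rule Vitali_covering_theorem_balls[of B K fst snd]) blast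
  let ?b = "\<lambda>i. ball (fst i) (snd i)"
  have disj: "disjoint_family_on ?b I" "disjoint_family_on (\<lambda>i. B \<inter> ?b i) I"
    using I(3) unfolding disjoint_family_on_def pairwise_def disjnt_def by blast+
  have "AE x in lebesgue. x \<in> B \<longrightarrow> x \<in> (\<Union>i\<in>I. B \<inter> ?b i)"
    using AE_not_in[of "B - (\<Union>i\<in>I. ?b i)"] I(4) by (auto simp: negligible_iff_null_sets)
  then have "emeasure lebesgue B \<le> emeasure lebesgue (\<Union>i\<in>I. B \<inter> ?b i)"
    using B I(1) by (intro emeasure_mono_AE sets.countable_UN') auto
  also have "\<dots> = (\<integral>\<^sup>+i. emeasure lebesgue (B \<inter> ?b i) \<partial>count_space I)"
    using B by (intro emeasure_UN_countable[OF _ I(1) disj(2)]) auto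
  also have "\<dots> \<le> (\<integral>\<^sup>+i. ennreal \<theta> * emeasure lebesgue (?b i) \<partial>count_space I)"
  proof (intro nn_integral_mono)
    fix i assume "i \<in> space (count_space I)"
    then have "measure lebesgue (B \<inter> ?b i) \<le> \<theta> * measure lebesgue (?b i)"
      using I(2) by (auto simp: K_def)
    moreover have "B \<inter> ?b i \<in> lmeasurable"
      using B by (intro fmeasurableI2[OF lmeasurable_ball]) auto
    ultimately show "emeasure lebesgue (B \<inter> ?b i) \<le> ennreal \<theta> * emeasure lebesgue (?b i)"
      using \<open>0 \<le> \<theta>\<close> by (simp add: emeasure_eq_measure2 ennreal_mult[symmetric] ennreal_leI)
  qed
  also have "\<dots> = ennreal \<theta> * emeasure lebesgue (\<Union>i\<in>I. ?b i)"
    by (simp add: nn_integral_cmult emeasure_UN_countable[OF _ I(1) disj(1)])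
  also have "\<dots> \<le> ennreal \<theta> * emeasure lebesgue U"
  proof (intro mult_left_mono emeasure_mono)
    show "(\<Union>i\<in>I. ?b i) \<subseteq> U"
      using I(2) by (force simp: K_def)
  qed (use U in \<open>auto simp: fmeasurableD\<close>)
  finally have "emeasure lebesgue B \<le> ennreal (\<theta> * measure lebesgue U)"
    using U(3) \<open>0 \<le> \<theta>\<close> by (simp add: emeasure_eq_measure2 ennreal_mult)
  moreover have "B \<in> lmeasurable"
    using B U(2) by (intro fmeasurableI2[OF U(3)])
  ultimately show ?thesis
    using \<open>0 \<le> \<theta>\<close> by (simp add: emeasure_eq_measure2)
qed

lemma ball_not_null_sets: "0 < r \<Longrightarrow> ball (x::'a::euclidean_space) r \<notin> null_sets lebesgue"
  using measure_ball_pos[of r x] by (auto simp: measure_def)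

lemma measure_Int_ball_pos_of_not_null_sets:
  assumes "S \<in> sets lebesgue" "S \<inter> ball c r \<notin> null_sets lebesgue"
  shows "0 < measure lebesgue (S \<inter> ball c r)"
  using assms by (intro measure_pos_of_not_null_sets fmeasurableI2[OF lmeasurable_ball]) auto

lemma null_sets_of_relative_density_le_bounded:
  fixes B :: "'a::euclidean_space set"
  assumes B: "B \<in> sets lebesgue" "bounded B" and "0 \<le> \<theta>" "\<theta> < 1"
    and dens: "\<And>x r. x \<in> B \<Longrightarrow> 0 < r \<Longrightarrow>
      \<exists>d. 0 < d \<and> d \<le> r \<and> measure lebesgue (B \<inter> ball x d) \<le> \<theta> * measure lebesgue (ball x d)"
  shows "B \<in> null_sets lebesgue"
proof -
  obtain k where "B \<subseteq> ball 0 k"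
    using bounded_subset_ballD[OF B(2)] by blast
  have B_lm: "B \<in> lmeasurable"
    using B(1) \<open>B \<subseteq> ball 0 k\<close> by (intro fmeasurableI2[OF lmeasurable_ball])
  have "measure lebesgue B \<le> \<theta> * measure lebesgue B + e" if "0 < e" for e
  proof -
    obtain T where T: "open T" "B \<subseteq> T" "T - B \<in> lmeasurable" "emeasure lebesgue (T - B) < ennreal e"
      using sets_lebesgue_outer_open[OF B(1) \<open>0 < e\<close>] by blast
    define U where "U = T \<inter> ball 0 k"
    have "U \<in> lmeasurable"
      unfolding U_def using T(1) by (intro bounded_set_imp_lmeasurable) auto
    then have U: "open U" "B \<subseteq> U" "U \<in> lmeasurable"
      using T \<open>B \<subseteq> ball 0 k\<close> by (auto simp: U_def)
    have "measure lebesgue U \<le> measure lebesgue (B \<union> (T - B))"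
      using U by (intro measure_mono_fmeasurable[OF _ _ fmeasurable.Un[OF B_lm T(3)]])
        (auto simp: U_def fmeasurableD simp del: Un_Diff_cancel)
    also have "\<dots> \<le> measure lebesgue B + measure lebesgue (T - B)"
      using B_lm T(3) by (intro measure_Un_le) auto
    also have "measure lebesgue (T - B) \<le> e"
      using T(3,4) \<open>0 < e\<close> by (simp add: emeasure_eq_measure2 ennreal_less_iff less_imp_le)
    finally have "measure lebesgue U \<le> measure lebesgue B + e"
      by simp
    have "measure lebesgue B \<le> \<theta> * measure lebesgue U"
      using B(1) U \<open>0 \<le> \<theta>\<close> dens by (rule measure_le_of_relative_density_le)
    then have "measure lebesgue B \<le> \<theta> * measure lebesgue B + \<theta> * e"
      using mult_left_mono[OF \<open>measure lebesgue U \<le> measure lebesgue B + e\<close> \<open>0 \<le> \<theta>\<close>]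
      by (simp add: distrib_left)
    moreover have "\<theta> * e \<le> e"
      using \<open>0 \<le> \<theta>\<close> \<open>\<theta> < 1\<close> \<open>0 < e\<close> by (intro mult_left_le_one_le) auto
    ultimately show ?thesis
      by linarith
  qed
  then have "measure lebesgue B \<le> \<theta> * measure lebesgue B"
    by (rule field_le_epsilon)
  then have "(1 - \<theta>) * measure lebesgue B \<le> 0"
    by (simp add: algebra_simps)
  then have "measure lebesgue B = 0"
    using \<open>\<theta> < 1\<close> measure_nonneg[of lebesgue B] by (simp add: mult_le_0_iff)
  then show ?thesis
    using B_lm by (auto simp: null_sets_def emeasure_eq_measure2 fmeasurableD)
qed

lemma null_sets_of_relative_density_le:
  fixes A :: "'a::euclidean_space set"
  assumes A: "A \<in> sets lebesgue" and "0 \<le> \<theta>" "\<theta> < 1"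
    and dens: "\<And>x r. x \<in> A \<Longrightarrow> 0 < r \<Longrightarrow>
      \<exists>d. 0 < d \<and> d \<le> r \<and> measure lebesgue (A \<inter> ball x d) \<le> \<theta> * measure lebesgue (ball x d)"
  shows "A \<in> null_sets lebesgue"
proof -
  have "A \<inter> ball 0 (real k) \<in> null_sets lebesgue" for k :: nat
  proof (rule null_sets_of_relative_density_le_bounded[OF _ _ \<open>0 \<le> \<theta>\<close> \<open>\<theta> < 1\<close>])
    fix x and r :: real
    assume "x \<in> A \<inter> ball 0 (real k)" "0 < r"
    then obtain d where d: "0 < d" "d \<le> r" "measure lebesgue (A \<inter> ball x d) \<le> \<theta> * measure lebesgue (ball x d)"
      using dens by blast
    have "A \<inter> ball x d \<in> lmeasurable"
      using A by (intro fmeasurableI2[OF lmeasurable_ball]) auto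
    then have "measure lebesgue (A \<inter> ball 0 (real k) \<inter> ball x d) \<le> measure lebesgue (A \<inter> ball x d)"
      using A by (intro measure_mono_fmeasurable sets.Int) auto
    with d show "\<exists>d. 0 < d \<and> d \<le> r \<and>
        measure lebesgue (A \<inter> ball 0 (real k) \<inter> ball x d) \<le> \<theta> * measure lebesgue (ball x d)"
      by force
  qed (use A in auto)
  then have "(\<Union>k. A \<inter> ball 0 (real k)) \<in> null_sets lebesgue"
    by (rule null_sets_UN)
  moreover have "(\<Union>k. A \<inter> ball 0 (real k)) = A"
    using reals_Archimedean2 by (auto simp: dist_norm)
  ultimately show ?thesis
    by simp
qed

lemma nn_integral_emeasure_Int_ball:
  fixes G :: "'a::euclidean_space set"
  assumes G: "G \<in> sets lebesgue"
  shows "(\<integral>\<^sup>+y. emeasure lebesgue (G \<inter> ball y r) \<partial>lebesgue)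
    = emeasure lebesgue (ball (0::'a) r) * emeasure lebesgue G"
proof -
  interpret pair_sigma_finite "lebesgue :: 'a measure" "lebesgue :: 'a measure"
    by (intro pair_sigma_finite.intro sigma_finite_lebesgue)
  let ?L2 = "lebesgue \<Otimes>\<^sub>M lebesgue :: ('a \<times> 'a) measure"
  define f where "f x y = indicator G x * (indicator {..<r} (dist x y) :: ennreal)" for x y
  have fst: "fst \<in> borel_measurable ?L2" and snd: "snd \<in> borel_measurable ?L2"
    using measurable_comp[OF measurable_fst id_borel_measurable_lebesgue]
      measurable_comp[OF measurable_snd id_borel_measurable_lebesgue] by (simp_all add: comp_def)
  have "(\<lambda>z. indicator G (fst z) :: ennreal) \<in> borel_measurable ?L2"
    using G by (intro measurable_compose[OF measurable_fst]) simp
  moreover have "(\<lambda>z. indicator {..<r} (dist (fst z) (snd z)) :: ennreal) \<in> borel_measurable ?L2"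
    by (intro measurable_compose[OF borel_measurable_dist[OF fst snd]]) simp
  ultimately have f: "case_prod f \<in> borel_measurable ?L2"
    unfolding f_def case_prod_beta' by (rule borel_measurable_times_ennreal)
  have "emeasure lebesgue (G \<inter> ball y r) = (\<integral>\<^sup>+x. indicator (G \<inter> ball y r) x \<partial>lebesgue)" for y
    using G by (intro nn_integral_indicator[symmetric]) auto
  also have "\<dots> y = (\<integral>\<^sup>+x. f x y \<partial>lebesgue)" for y
    by (intro nn_integral_cong) (simp add: f_def indicator_def dist_commute)
  finally have "(\<integral>\<^sup>+y. emeasure lebesgue (G \<inter> ball y r) \<partial>lebesgue) = (\<integral>\<^sup>+y. \<integral>\<^sup>+x. f x y \<partial>lebesgue \<partial>lebesgue)"
    by simp
  also have "\<dots> = (\<integral>\<^sup>+x. \<integral>\<^sup>+y. f x y \<partial>lebesgue \<partial>lebesgue)"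
    by (rule Fubini'[OF f])
  also have "\<dots> = (\<integral>\<^sup>+x. emeasure lebesgue (ball (0::'a) r) * indicator G x \<partial>lebesgue)"
  proof (intro nn_integral_cong)
    fix x :: 'a
    have "(\<integral>\<^sup>+y. f x y \<partial>lebesgue) = (\<integral>\<^sup>+y. indicator G x * indicator (ball x r) y \<partial>lebesgue)"
      by (intro nn_integral_cong) (simp add: f_def indicator_def)
    also have "\<dots> = indicator G x * emeasure lebesgue (ball x r)"
      by (rule nn_integral_cmult_indicator) simp
    also have "emeasure lebesgue (ball x r) = emeasure lebesgue (ball (0::'a) r)"
      by (cases "0 \<le> r") (simp_all add: emeasure_ball ball_empty)
    finally show "(\<integral>\<^sup>+y. f x y \<partial>lebesgue) = emeasure lebesgue (ball (0::'a) r) * indicator G x"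
      by (simp add: mult.commute)
  qed
  also have "\<dots> = emeasure lebesgue (ball (0::'a) r) * emeasure lebesgue G"
    by (rule nn_integral_cmult_indicator[OF G])
  finally show ?thesis .
qed

lemma measure_Int_ball_ge_of_uniform_density:
  fixes G :: "'a::euclidean_space set"
  assumes G: "G \<in> sets lebesgue" and "0 \<le> \<alpha>" "0 < \<rho>"
    and dens: "\<And>y. \<alpha> * measure lebesgue (ball y \<rho>) \<le> measure lebesgue (G \<inter> ball y \<rho>)"
  shows "\<alpha> * measure lebesgue (ball b (R - \<rho>)) \<le> measure lebesgue (G \<inter> ball b R)"
proof -
  let ?v = "measure lebesgue (ball (0::'a) \<rho>)"
  have v: "0 < ?v" "emeasure lebesgue (ball y \<rho>) = ennreal ?v" for y :: 'a
    using \<open>0 < \<rho>\<close> by (simp_all add: content_ball_pos emeasure_ball content_ball)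
  have GR: "G \<inter> ball b R \<in> lmeasurable"
    using G by (intro fmeasurableI2[OF lmeasurable_ball]) auto
  have "ennreal (\<alpha> * ?v) * emeasure lebesgue (ball b (R - \<rho>))
      = (\<integral>\<^sup>+y. ennreal (\<alpha> * ?v) * indicator (ball b (R - \<rho>)) y \<partial>lebesgue)"
    by (simp add: nn_integral_cmult_indicator)
  also have "\<dots> \<le> (\<integral>\<^sup>+y. emeasure lebesgue ((G \<inter> ball b R) \<inter> ball y \<rho>) \<partial>lebesgue)"
  proof (intro nn_integral_mono)
    fix y
    show "ennreal (\<alpha> * ?v) * indicator (ball b (R - \<rho>)) y \<le> emeasure lebesgue ((G \<inter> ball b R) \<inter> ball y \<rho>)"
    proof (cases "y \<in> ball b (R - \<rho>)")
      case True
      have "ball y \<rho> \<subseteq> ball b R"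
      proof
        fix z
        assume "z \<in> ball y \<rho>"
        then show "z \<in> ball b R"
          using True dist_triangle[of b z y] by auto
      qed
      then have "(G \<inter> ball b R) \<inter> ball y \<rho> = G \<inter> ball y \<rho>"
        by blast
      moreover have "G \<inter> ball y \<rho> \<in> lmeasurable"
        using G by (intro fmeasurableI2[OF lmeasurable_ball]) auto
      ultimately show ?thesis
        using True dens[of y] v(2)[of y] \<open>0 < \<rho>\<close>
        by (simp add: emeasure_eq_measure2 content_ball ennreal_leI)
    qed simp
  qed
  also have "\<dots> = ennreal (?v * measure lebesgue (G \<inter> ball b R))"
    using GR v(2)[of 0] by (simp add: nn_integral_emeasure_Int_ball fmeasurableD emeasure_eq_measure2 ennreal_mult)
  finally have "\<alpha> * ?v * measure lebesgue (ball b (R - \<rho>)) \<le> ?v * measure lebesgue (G \<inter> ball b R)"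
    using \<open>0 \<le> \<alpha>\<close> v(1)
    by (simp add: emeasure_eq_measure2 ennreal_mult[symmetric])
  then show ?thesis
    using v(1) by (simp add: mult.commute mult.left_commute)
qed

lemma measure_Int_ge_of_measure_Diff_le:
  assumes "B \<in> lmeasurable" "S \<in> sets lebesgue" "measure lebesgue (B - S) \<le> t"
  shows "measure lebesgue B - t \<le> measure lebesgue (S \<inter> B)"
proof -
  have "measure lebesgue (B - S \<inter> B) = measure lebesgue B - measure lebesgue (S \<inter> B)"
    using assms(2) fmeasurableD[OF assms(1)] fmeasurableD2[OF assms(1)] by (intro measure_Diff) auto
  moreover have "B - S \<inter> B = B - S"
    by blast
  ultimately have "measure lebesgue (B - S) = measure lebesgue B - measure lebesgue (S \<inter> B)"
    by simp
  with assms(3) show ?thesis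
    by linarith
qed

lemma powr_scaled_ge:
  fixes a t s x :: real and k :: nat
  assumes "0 < a" "0 < t" "0 \<le> s" "a * t ^ k \<le> x"
  shows "a powr s * t powr (k * s) \<le> x powr s"
proof -
  have "a powr s * t powr (k * s) = (a * t ^ k) powr s"
    using assms(1,2) by (simp add: powr_mult powr_powr powr_realpow[symmetric] mult.commute)
  also have "\<dots> \<le> x powr s"
    using assms by (intro powr_mono2) auto
  finally show ?thesis .
qed

definition half_dense :: "'a::euclidean_space set \<Rightarrow> bool" where
  "half_dense G \<longleftrightarrow> (\<forall>y. measure lebesgue (ball y 1) / 2 \<le> measure lebesgue (G \<inter> ball y 1))"

lemma half_dense_measure_Int_ball_ge:
  fixes G :: "'a::euclidean_space set"
  assumes "G \<in> sets lebesgue" "half_dense G" "2 \<le> R"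
  shows "measure lebesgue (ball b R) / 2 ^ (DIM('a) + 1) \<le> measure lebesgue (G \<inter> ball b R)"
proof -
  have "R ^ DIM('a) \<le> 2 ^ DIM('a) * (R - 1) ^ DIM('a)"
    unfolding power_mult_distrib[symmetric] using assms(3) by (intro power_mono) auto
  then have "measure lebesgue (ball b R) \<le> 2 ^ DIM('a) * measure lebesgue (ball b (R - 1))"
    using assms(3) by (simp add: content_ball mult.left_commute mult_left_mono)
  moreover have "1 / 2 * measure lebesgue (ball b (R - 1)) \<le> measure lebesgue (G \<inter> ball b R)"
    using assms(1,2) by (intro measure_Int_ball_ge_of_uniform_density) (auto simp: half_dense_def)
  then have "2 ^ DIM('a) * measure lebesgue (ball b (R - 1))
      \<le> 2 ^ DIM('a) * (2 * measure lebesgue (G \<inter> ball b R))"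
    by (intro mult_left_mono) auto
  ultimately have "measure lebesgue (ball b R) \<le> 2 ^ DIM('a) * (2 * measure lebesgue (G \<inter> ball b R))"
    by (rule order_trans)
  then show ?thesis
    by (simp add: field_simps)
qed

lemma unit_ball_vol_neq_0: "0 \<le> n \<Longrightarrow> unit_ball_vol n \<noteq> 0"
  using unit_ball_vol_pos[of n] by linarith

lemma powr_bounded_sequentially_imp_nonpos:
  assumes bounded: "\<And>N::nat. N0 \<le> N \<Longrightarrow> real N powr s \<le> M"
  shows "s \<le> 0"
proof (rule ccontr)
  assume "\<not> s \<le> 0"
  define N where "N = max N0 (nat \<lceil>(\<bar>M\<bar> + 1) powr (1 / s)\<rceil>)"
  have "(\<bar>M\<bar> + 1) powr (1 / s) \<le> real N"
    unfolding N_def by linarith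
  then have "((\<bar>M\<bar> + 1) powr (1 / s)) powr s \<le> real N powr s"
    using \<open>\<not> s \<le> 0\<close> by (intro powr_mono2) auto
  then have "\<bar>M\<bar> + 1 \<le> real N powr s"
    using \<open>\<not> s \<le> 0\<close> by (simp add: powr_powr)
  then show False
    using bounded[of N] by (simp add: N_def)
qed

lemma powr_bounded_at_top_imp_nonpos:
  assumes "\<And>R::real. R0 \<le> R \<Longrightarrow> R powr s \<le> M"
  shows "s \<le> 0"
proof (rule powr_bounded_sequentially_imp_nonpos)
  fix N :: nat
  assume "nat \<lceil>R0\<rceil> \<le> N"
  then have "R0 \<le> real N"
    using real_nat_ceiling_ge[of R0] by linarith
  then show "real N powr s \<le> M"
    by (rule assms)
qed

lemma powr_bounded_at_0_imp_nonneg: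
  assumes "0 < d0" and bounded: "\<And>d::real. 0 < d \<Longrightarrow> d \<le> d0 \<Longrightarrow> d powr s \<le> M"
  shows "0 \<le> s"
proof -
  have "R powr - s \<le> M" if "1 / d0 \<le> R" for R
  proof -
    have "0 < R"
      using that \<open>0 < d0\<close> by (meson divide_pos_pos order_less_le_trans zero_less_one)
    then show ?thesis
      using bounded[of "1 / R"] that \<open>0 < d0\<close> by (simp add: powr_minus_divide powr_divide field_simps)
  qed
  then show ?thesis
    using powr_bounded_at_top_imp_nonpos[of "1 / d0" "- s" M] by simp
qed

definition sign_vectors :: "nat \<Rightarrow> (nat \<Rightarrow> real) set" where
  "sign_vectors N = {..<N} \<rightarrow>\<^sub>E {-1, 1}"

lemma finite_sign_vectors: "finite (sign_vectors N)"
  by (simp add: sign_vectors_def finite_PiE)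

lemma card_sign_vectors_pos: "0 < card (sign_vectors N)"
  by (simp add: sign_vectors_def card_PiE)

lemma abs_sign_vector_le_1: "\<theta> \<in> sign_vectors N \<Longrightarrow> k < N \<Longrightarrow> \<bar>\<theta> k\<bar> \<le> 1"
  by (auto simp: sign_vectors_def PiE_def Pi_def)

text \<open>Flipping every sign except the \<open>k\<close>-th pairs \<open>u + R\<close> with \<open>u - R\<close>, where \<open>u = \<theta>\<^sub>k z\<^sub>k\<close>, and
  \<open>max \<bar>u + R\<bar> \<bar>u - R\<bar> \<ge> \<bar>u\<bar>\<close>.\<close>
lemma sum_sign_vectors_norm_powr_ge:
  fixes z :: "nat \<Rightarrow> complex" and s :: real
  assumes k: "k < N" and "1 \<le> s"
  shows "real (card (sign_vectors N)) * norm (z k) powr s / 2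
    \<le> (\<Sum>\<theta>\<in>sign_vectors N. norm (\<Sum>j<N. of_real (\<theta> j) * z j) powr s)"
proof -
  let ?T = "sign_vectors N"
  define flip where "flip \<theta> = (\<lambda>j. if j < N \<and> j \<noteq> k then - \<theta> j else \<theta> j)" for \<theta> :: "nat \<Rightarrow> real"
  define g where "g \<theta> = norm (\<Sum>j<N. of_real (\<theta> j) * z j) powr s" for \<theta>
  have flip_T: "flip \<theta> \<in> ?T" if "\<theta> \<in> ?T" for \<theta>
    using that unfolding sign_vectors_def flip_def PiE_def Pi_def extensional_def by auto
  have flip_flip: "flip (flip \<theta>) = \<theta>" for \<theta>
    by (auto simp: flip_def fun_eq_iff)
  have "norm (z k) powr s \<le> g \<theta> + g (flip \<theta>)" if "\<theta> \<in> ?T" for \<theta>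
  proof -
    define u where "u = of_real (\<theta> k) * z k"
    define R where "R = (\<Sum>j\<in>{..<N} - {k}. of_real (\<theta> j) * z j)"
    have "\<theta> k = -1 \<or> \<theta> k = 1"
      using that k by (auto simp: sign_vectors_def)
    then have "norm u = norm (z k)"
      by (auto simp: u_def norm_mult)
    have "(\<Sum>j<N. of_real (\<theta> j) * z j) = u + R"
      using k unfolding u_def R_def by (subst sum.remove[of _ k]) auto
    moreover have "(\<Sum>j<N. of_real (flip \<theta> j) * z j) = u - R"
      using k unfolding u_def R_def
      by (subst sum.remove[of _ k]) (auto simp: flip_def sum_negf[symmetric] intro!: sum.cong)
    moreover have "norm u powr s \<le> norm (u + R) powr s + norm (u - R) powr s"
    proof -
      have "norm u \<le> max (norm (u + R)) (norm (u - R))"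
        using norm_triangle_ineq[of "u + R" "u - R"] by simp
      then have "norm u powr s \<le> max (norm (u + R)) (norm (u - R)) powr s"
        using \<open>1 \<le> s\<close> by (intro powr_mono2) auto
      also have "\<dots> \<le> norm (u + R) powr s + norm (u - R) powr s"
        by (simp add: max_def)
      finally show ?thesis .
    qed
    ultimately show ?thesis
      using \<open>norm u = norm (z k)\<close> by (simp add: g_def)
  qed
  then have "real (card ?T) * norm (z k) powr s \<le> (\<Sum>\<theta>\<in>?T. g \<theta> + g (flip \<theta>))"
    using sum_mono[of ?T "\<lambda>_. norm (z k) powr s"] by simp
  also have "\<dots> = 2 * (\<Sum>\<theta>\<in>?T. g \<theta>)"
  proof -
    have "(\<Sum>\<theta>\<in>?T. g (flip \<theta>)) = (\<Sum>\<theta>\<in>?T. g \<theta>)"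
      by (rule sum.reindex_bij_witness[of _ flip flip]) (auto simp: flip_T flip_flip)
    then show ?thesis
      by (simp add: sum.distrib)
  qed
  finally show ?thesis
    by (simp add: g_def)
qed

lemma exists_ge_of_sum_ge:
  fixes f :: "'a \<Rightarrow> ennreal"
  assumes "finite A" "A \<noteq> {}" "of_nat (card A) * X \<le> (\<Sum>a\<in>A. f a)"
  shows "\<exists>a\<in>A. X \<le> f a"
proof -
  have "Max (f ` A) \<in> f ` A"
    using assms(1,2) by (intro Max_in) auto
  then obtain a where a: "a \<in> A" "f a = Max (f ` A)"
    by (metis imageE)
  have "(\<Sum>b\<in>A. f b) \<le> of_nat (card A) * f a"
    using assms(1) a by (intro sum_bounded_above) simp
  with assms(3) have "of_nat (card A) * X \<le> of_nat (card A) * f a"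
    by (rule order_trans)
  then have "X \<le> f a"
    using assms(1,2) by (subst (asm) ennreal_mult_le_mult_iff) auto
  with a(1) show ?thesis ..
qed

definition bump_centre :: "'a::euclidean_space \<Rightarrow> nat \<Rightarrow> 'a" where
  "bump_centre u k = (3 * real k) *\<^sub>R u"

lemma disjoint_balls_bump_centre:
  assumes "norm u = 1" "j \<noteq> k" "r \<le> 1"
  shows "ball (bump_centre u j) r \<inter> ball (bump_centre u k) r = {}"
proof -
  have "1 \<le> \<bar>real j - real k\<bar>"
    using assms(2) by linarith
  then have "3 \<le> 3 * \<bar>real j - real k\<bar>"
    by simp
  also have "\<dots> = dist (bump_centre u j) (bump_centre u k)"
  proof -
    have "bump_centre u j - bump_centre u k = (3 * (real j - real k)) *\<^sub>R u"
      by (simp add: bump_centre_def algebra_simps)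
    then have "dist (bump_centre u j) (bump_centre u k) = \<bar>3 * (real j - real k)\<bar> * norm u"
      by (simp only: dist_norm norm_scaleR)
    then show ?thesis
      using assms(1) by (simp only: abs_mult)
  qed
  finally show ?thesis
    using assms(3) by (auto intro!: disjoint_ballI)
qed

text \<open>The test functions \<open>\<Sum>\<^sub>k \<theta>\<^sub>k e\<^sup>2\<^sup>\<pi>\<^sup>i\<^sup>\<langle>c\<^sub>k,t\<^sup>\<rangle> 1\<^sub>B\<^sub>(\<^sub>c\<^sub>k\<^sub>,\<^sub>1\<^sub>/\<^sub>8\<^sub>)\<close> with random signs \<open>\<theta>\<close>, whose
  bumps and whose Fourier peaks sit at the well separated points \<open>c\<^sub>k = 3k u\<close>.\<close>
definition bump_sum :: "'a::euclidean_space \<Rightarrow> nat \<Rightarrow> (nat \<Rightarrow> real) \<Rightarrow> 'a \<Rightarrow> complex" where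
  "bump_sum u N \<theta> t = (\<Sum>k<N. of_real (\<theta> k) * modulated_indicator (bump_centre u k) (ball (bump_centre u k) (1 / 8)) t)"

lemma bump_sum_measurable: "bump_sum u N \<theta> \<in> borel_measurable lebesgue"
  unfolding bump_sum_def[abs_def]
  by (intro borel_measurable_sum borel_measurable_times borel_measurable_const modulated_indicator_measurable) simp

lemma integrable_bump_sum: "integrable lebesgue (bump_sum u N \<theta>)"
  unfolding bump_sum_def[abs_def]
  by (intro Bochner_Integration.integrable_sum integrable_mult_right integrable_modulated_indicator) simp

lemma norm_bump_sum_le:
  assumes "norm u = 1" "\<theta> \<in> sign_vectors N"
  shows "norm (bump_sum u N \<theta> t) \<le> indicator (\<Union>k<N. ball (bump_centre u k) (1 / 8)) t"
proof (cases "\<exists>k<N. t \<in> ball (bump_centre u k) (1 / 8)")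
  case True
  then obtain k where k: "k < N" "t \<in> ball (bump_centre u k) (1 / 8)"
    by blast
  then have "t \<notin> ball (bump_centre u j) (1 / 8)" if "j \<noteq> k" for j
    using disjoint_balls_bump_centre[OF assms(1) that, of "1 / 8"] by auto
  then have "bump_sum u N \<theta> t = of_real (\<theta> k) * modulated_indicator (bump_centre u k) (ball (bump_centre u k) (1 / 8)) t"
    unfolding bump_sum_def using k(1)
    by (subst sum.remove[of _ k]) (auto simp: modulated_indicator_def intro!: sum.neutral)
  moreover have "t \<in> (\<Union>k<N. ball (bump_centre u k) (1 / 8))"
    using k by blast
  ultimately show ?thesis
    using k abs_sign_vector_le_1[OF assms(2) k(1)] by (simp add: norm_mult norm_modulated_indicator)
next
  case False
  then show ?thesis
    by (auto simp: bump_sum_def modulated_indicator_def intro!: sum.neutral)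
qed

lemma fourier_bump_sum:
  "fourier (bump_sum u N \<theta>) x
    = (\<Sum>k<N. of_real (\<theta> k) * fourier (modulated_indicator (bump_centre u k) (ball (bump_centre u k) (1 / 8))) x)"
  unfolding bump_sum_def[abs_def]
  by (subst fourier_sum) (auto intro!: integrable_modulated_indicator simp: fourier_cmult)

lemma emeasure_bump_balls:
  fixes u :: "'a::euclidean_space"
  assumes "norm u = 1"
  shows "emeasure lebesgue (\<Union>k<N. ball (bump_centre u k) 1)
    = ennreal (real N * measure lebesgue (ball (0::'a::euclidean_space) 1))"
proof -
  have "emeasure lebesgue (\<Union>k<N. ball (bump_centre u k) 1) = (\<Sum>k<N. emeasure lebesgue (ball (bump_centre u k) 1))"
    using disjoint_balls_bump_centre[OF assms]
    by (intro sum_emeasure[symmetric]) (auto simp: disjoint_family_on_def)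
  also have "\<dots> = (\<Sum>k<N. ennreal (measure lebesgue (ball (0::'a) 1)))"
    by (simp add: emeasure_ball content_ball)
  finally show ?thesis
    by (simp add: ennreal_of_nat_eq_real_of_nat ennreal_mult)
qed

text \<open>Averaging over all sign vectors, each of the \<open>N\<close> disjoint unit balls around the
  Fourier peaks contributes a fixed amount to the \<open>L\<^sup>s\<close> integral of the transform.\<close>
lemma exists_sign_vector_fourier_bump_sum_ge:
  fixes u :: "'a::euclidean_space"
  assumes "norm u = 1" "1 \<le> s"
  obtains \<theta> where "\<theta> \<in> sign_vectors N"
    "ennreal ((measure lebesgue (ball (0::'a) (1 / 8)) / 2) powr s / 2 * (real N * measure lebesgue (ball (0::'a) 1)))
      \<le> (\<integral>\<^sup>+x. ennreal (norm (fourier (bump_sum u N \<theta>) x) powr s) \<partial>lebesgue)"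
proof -
  let ?T = "sign_vectors N" and ?U = "\<Union>k<N. ball (bump_centre u k) 1"
  let ?g = "\<lambda>k. modulated_indicator (bump_centre u k) (ball (bump_centre u k) (1 / 8))"
  let ?e = "measure lebesgue (ball (0::'a) (1 / 8))"
  let ?c = "real (card ?T) * (?e / 2) powr s / 2"
  have peak: "?e / 2 \<le> norm (fourier (?g k) x)" if "x \<in> ball (bump_centre u k) 1" for k x
    using that fourier_modulated_indicator_ge[of "ball (bump_centre u k) (1 / 8)" "bump_centre u k" "1 / 8"]
    by (simp add: dist_commute content_ball)
  have "ennreal ?c * indicator ?U x
      \<le> (\<Sum>\<theta>\<in>?T. ennreal (norm (fourier (bump_sum u N \<theta>) x) powr s) * indicator ?U x)" for x
  proof (cases "x \<in> ?U")
    case True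
    then obtain k where "k < N" "x \<in> ball (bump_centre u k) 1"
      by blast
    then have "?c \<le> real (card ?T) * norm (fourier (?g k) x) powr s / 2"
      using peak \<open>1 \<le> s\<close> by (intro divide_right_mono mult_left_mono powr_mono2) auto
    also have "\<dots> \<le> (\<Sum>\<theta>\<in>?T. norm (fourier (bump_sum u N \<theta>) x) powr s)"
      unfolding fourier_bump_sum by (rule sum_sign_vectors_norm_powr_ge[OF \<open>k < N\<close> \<open>1 \<le> s\<close>])
    finally have "ennreal ?c \<le> ennreal (\<Sum>\<theta>\<in>?T. norm (fourier (bump_sum u N \<theta>) x) powr s)"
      by (rule ennreal_leI)
    also have "\<dots> = (\<Sum>\<theta>\<in>?T. ennreal (norm (fourier (bump_sum u N \<theta>) x) powr s))"
      by (rule sum_ennreal[symmetric]) simp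
    finally show ?thesis
      using True by simp
  qed simp
  then have "ennreal ?c * emeasure lebesgue ?U
      \<le> (\<integral>\<^sup>+x. (\<Sum>\<theta>\<in>?T. ennreal (norm (fourier (bump_sum u N \<theta>) x) powr s) * indicator ?U x) \<partial>lebesgue)"
    by (subst nn_integral_cmult_indicator[symmetric]) (auto intro!: nn_integral_mono)
  also have "\<dots> = (\<Sum>\<theta>\<in>?T. \<integral>\<^sup>+x. ennreal (norm (fourier (bump_sum u N \<theta>) x) powr s) * indicator ?U x \<partial>lebesgue)"
  proof (intro nn_integral_sum borel_measurable_times_ennreal measurable_compose[OF _ measurable_ennreal]
      powr_real_measurable borel_measurable_indicator)
    show "?U \<in> sets lebesgue"
      by (intro sets.countable_UN') auto
  qed (auto intro: measurable_compose[OF fourier_measurable[OF bump_sum_measurable] borel_measurable_norm])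
  also have "\<dots> \<le> (\<Sum>\<theta>\<in>?T. \<integral>\<^sup>+x. ennreal (norm (fourier (bump_sum u N \<theta>) x) powr s) \<partial>lebesgue)"
    by (intro sum_mono nn_integral_mono) (simp add: indicator_def)
  finally have "of_nat (card ?T) * ennreal ((?e / 2) powr s / 2 * (real N * measure lebesgue (ball (0::'a) 1)))
      \<le> (\<Sum>\<theta>\<in>?T. \<integral>\<^sup>+x. ennreal (norm (fourier (bump_sum u N \<theta>) x) powr s) \<partial>lebesgue)"
    by (simp add: emeasure_bump_balls[OF assms(1)] ennreal_of_nat_eq_real_of_nat ennreal_mult[symmetric] ac_simps)
  moreover have "?T \<noteq> {}"
    using card_sign_vectors_pos[of N] by auto
  ultimately show ?thesis
    using exists_ge_of_sum_ge[OF finite_sign_vectors] that by blast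
qed

locale weighted_fourier_inequality =
  fixes p q :: ennreal and w :: "'a::euclidean_space \<Rightarrow> real" and C :: real
  assumes p: "1 \<le> p" and q: "1 \<le> q"
    and w_measurable: "w \<in> borel_measurable lebesgue" and w_pos: "\<And>x. 0 < w x"
    and C_pos: "0 < C"
    and inequality: "\<And>f. integrable lebesgue f \<Longrightarrow> Lp_norm p (\<lambda>x. w x *\<^sub>R f x) < \<infinity> \<Longrightarrow>
      Lp_norm q (\<lambda>x. w x *\<^sub>R fourier f x) \<le> ennreal C * Lp_norm p (\<lambda>x. w x *\<^sub>R f x)"
begin

abbreviation "pinv \<equiv> inv_exponent p"
abbreviation "qinv \<equiv> inv_exponent q"

lemma level_sets_lebesgue:
  "{x. w x \<le> c} \<in> sets lebesgue" "{x. w x < c} \<in> sets lebesgue"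
  "{x. c \<le> w x} \<in> sets lebesgue" "{x. c < w x} \<in> sets lebesgue"
  using lebesgue_measurable_vimage_borel[OF w_measurable, of "{..c}"]
    lebesgue_measurable_vimage_borel[OF w_measurable, of "{..<c}"]
    lebesgue_measurable_vimage_borel[OF w_measurable, of "{c..}"]
    lebesgue_measurable_vimage_borel[OF w_measurable, of "{c<..}"]
  by simp_all

text \<open>Test the inequality with \<open>f = e\<^sup>2\<^sup>\<pi>\<^sup>i\<^sup>\<langle>\<xi>,t\<rangle> 1\<^sub>E\<close>: then \<open>\<parallel>w f\<parallel>\<^sub>p \<le> K \<bar>E\<bar>\<^sup>1\<^sup>/\<^sup>p\<close>, while
  \<open>\<bar>f\<^sup>^\<bar> \<ge> \<bar>E\<bar>/2\<close> on \<open>F\<close> by the uncertainty-type estimate for modulated indicators.\<close>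
lemma level_sets_estimate:
  assumes E: "E \<in> sets lebesgue" "E \<subseteq> cball c r" "0 < measure lebesgue E" and "0 < r"
    and w_E: "\<And>x. x \<in> E \<Longrightarrow> w x \<le> K"
    and F: "F \<in> sets lebesgue" "F \<subseteq> cball \<xi> (1 / (8 * r))"
    and "0 < \<eta>" and w_F: "\<And>x. x \<in> F \<Longrightarrow> \<eta> \<le> w x"
  shows "measure lebesgue E powr (1 - pinv) * measure lebesgue F powr qinv \<le> 2 * C * K / \<eta>"
proof -
  let ?E = "measure lebesgue E" and ?F = "measure lebesgue F"
  have E_lm: "E \<in> lmeasurable"
    using E(2,1) by (rule fmeasurableI2[OF lmeasurable_cball])
  obtain x0 where "x0 \<in> E"
    using E(3) by fastforce
  then have "0 \<le> K"
    using w_E w_pos by (meson less_le_trans less_imp_le)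
  define f where "f = modulated_indicator \<xi> E"
  have f: "integrable lebesgue f"
    unfolding f_def using E_lm by (rule integrable_modulated_indicator)
  have "(\<lambda>x. w x *\<^sub>R f x) \<in> borel_measurable lebesgue"
    unfolding f_def using w_measurable modulated_indicator_measurable[OF E(1)] by measurable
  moreover have "AE x in lebesgue. norm (w x *\<^sub>R f x) \<le> K * indicator E x"
    using w_E w_pos by (intro AE_I2) (simp add: f_def norm_modulated_indicator indicator_def abs_of_pos)
  ultimately have upper: "Lp_norm p (\<lambda>x. w x *\<^sub>R f x) \<le> ennreal (K * ?E powr pinv)"
    by (intro Lp_norm_le_indicator_bound[OF p _ E_lm E(3) \<open>0 \<le> K\<close>])
  have "\<eta> * (?E / 2) \<le> norm (w x *\<^sub>R fourier f x)" if "x \<in> F" for x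
  proof -
    have "?E / 2 \<le> norm (fourier f x)"
      unfolding f_def using F(2) that
      by (intro fourier_modulated_indicator_ge[OF E_lm E(2) \<open>0 < r\<close>]) (auto simp: dist_commute)
    then have "\<eta> * (?E / 2) \<le> w x * norm (fourier f x)"
      using w_F[OF that] \<open>0 < \<eta>\<close> by (intro mult_mono) auto
    then show ?thesis
      using w_pos[of x] by simp
  qed
  then have "ennreal (\<eta> * (?E / 2) * ?F powr qinv) \<le> Lp_norm q (\<lambda>x. w x *\<^sub>R fourier f x)"
    using \<open>0 < \<eta>\<close> by (intro Lp_norm_ge_on_set[OF q F(1)]) auto
  also have "\<dots> \<le> ennreal C * Lp_norm p (\<lambda>x. w x *\<^sub>R f x)"
    using le_less_trans[OF upper ennreal_less_top] by (intro inequality[OF f]) simp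
  also have "\<dots> \<le> ennreal C * ennreal (K * ?E powr pinv)"
    by (rule mult_left_mono[OF upper]) simp
  also have "\<dots> = ennreal (C * K * ?E powr pinv)"
    using C_pos \<open>0 \<le> K\<close> by (simp add: ennreal_mult mult.assoc)
  finally have main: "\<eta> * (?E / 2) * ?F powr qinv \<le> C * K * ?E powr pinv"
    using C_pos \<open>0 \<le> K\<close> by simp
  define a b where "a = ?E powr pinv" and "b = ?E powr (1 - pinv)"
  have "?E = a * b" and "0 < a"
    using E(3) by (simp_all add: a_def b_def powr_add[symmetric])
  with main have "a * (\<eta> * (b * ?F powr qinv)) \<le> a * (2 * C * K)"
    unfolding a_def[symmetric] by (simp add: algebra_simps)
  then have "\<eta> * (b * ?F powr qinv) \<le> 2 * C * K"
    using \<open>0 < a\<close> by simp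
  then show ?thesis
    using \<open>0 < \<eta>\<close> by (simp add: b_def field_simps)
qed

text \<open>Dilating the pair \<open>(E, F)\<close> by \<open>r\<close> and \<open>1/r\<close> changes the left-hand side of
  the previous estimate by the factor \<open>r\<^sup>n\<^sup>(\<^sup>1\<^sup>-\<^sup>1\<^sup>/\<^sup>p\<^sup>-\<^sup>1\<^sup>/\<^sup>q\<^sup>)\<close>.\<close>
lemma scaled_level_sets_estimate:
  assumes "0 < r"
    and E: "E \<in> sets lebesgue" "E \<subseteq> ball c r" "\<And>x. x \<in> E \<Longrightarrow> w x \<le> K"
      "\<alpha> * measure lebesgue (ball c r) \<le> measure lebesgue E" "0 < \<alpha>"
    and F: "F \<in> sets lebesgue" "F \<subseteq> ball \<xi> (1 / (8 * r))" "\<And>x. x \<in> F \<Longrightarrow> \<eta> \<le> w x"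
      "\<beta> * measure lebesgue (ball \<xi> (1 / (8 * r))) \<le> measure lebesgue F" "0 < \<beta>" "0 < \<eta>"
  shows "(\<alpha> * unit_ball_vol DIM('a)) powr (1 - pinv) * (\<beta> * unit_ball_vol DIM('a) / 8 ^ DIM('a)) powr qinv
    * r powr (DIM('a) * (1 - pinv - qinv)) \<le> 2 * C * K / \<eta>"
proof -
  let ?a = "\<alpha> * unit_ball_vol DIM('a)" and ?b = "\<beta> * unit_ball_vol DIM('a) / 8 ^ DIM('a)"
  have E_ge: "?a powr (1 - pinv) * r powr (DIM('a) * (1 - pinv)) \<le> measure lebesgue E powr (1 - pinv)"
    using E(4,5) \<open>0 < r\<close> inv_exponent_le_1[OF p]
    by (intro powr_scaled_ge) (auto simp: content_ball mult.assoc)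
  have F_ge: "?b powr qinv * (1 / r) powr (DIM('a) * qinv) \<le> measure lebesgue F powr qinv"
    using F(4,5) \<open>0 < r\<close> inv_exponent_nonneg
    by (intro powr_scaled_ge) (auto simp: content_ball field_simps)
  have "?a powr (1 - pinv) * ?b powr qinv * r powr (DIM('a) * (1 - pinv - qinv))
      = (?a powr (1 - pinv) * r powr (DIM('a) * (1 - pinv))) * (?b powr qinv * (1 / r) powr (DIM('a) * qinv))"
    using \<open>0 < r\<close> by (simp add: powr_divide powr_diff right_diff_distrib ac_simps)
  also have "\<dots> \<le> measure lebesgue E powr (1 - pinv) * measure lebesgue F powr qinv"
    using E_ge F_ge by (intro mult_mono) auto
  also have "\<dots> \<le> 2 * C * K / \<eta>"
  proof (rule level_sets_estimate[OF E(1) _ _ \<open>0 < r\<close> E(3) F(1) _ F(6) F(3)])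
    show "E \<subseteq> cball c r" "F \<subseteq> cball \<xi> (1 / (8 * r))"
      using E(2) F(2) by auto
    show "0 < measure lebesgue E"
      using E(4,5) mult_pos_pos[OF \<open>0 < \<alpha>\<close> measure_ball_pos[of r c, OF \<open>0 < r\<close>]] by linarith
  qed
  finally show ?thesis .
qed

lemma sublevel_set_not_null:
  obtains K where "0 < K" "{x. w x \<le> K} \<inter> ball 0 (1 / 8) \<notin> null_sets lebesgue"
proof -
  have cover: "ball (0::'a) (1 / 8) \<subseteq> (\<Union>k. {x. w x \<le> real (Suc k)})"
  proof
    fix x :: 'a
    obtain k where "w x \<le> real k"
      using real_arch_simple by blast
    then show "x \<in> (\<Union>k. {x. w x \<le> real (Suc k)})"
      by (intro UN_I[of k]) auto
  qed
  have "ball (0::'a) (1 / 8) \<notin> null_sets lebesgue"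
    by (rule ball_not_null_sets) simp
  from not_null_sets_Int_UN[OF this _ cover]
  obtain k where "ball 0 (1 / 8) \<inter> {x. w x \<le> real (Suc k)} \<notin> null_sets lebesgue"
    using level_sets_lebesgue(1) by blast
  then show ?thesis
    by (intro that[of "real (Suc k)"]) (auto simp: Int_commute)
qed

lemma superlevel_set_not_null:
  obtains \<eta> where "0 < \<eta>" "{x. \<eta> \<le> w x} \<inter> ball 0 (1 / 8) \<notin> null_sets lebesgue"
proof -
  have cover: "ball (0::'a) (1 / 8) \<subseteq> (\<Union>k. {x. 1 / real (Suc k) \<le> w x})"
  proof
    fix x :: 'a
    obtain k where "inverse (real (Suc k)) < w x"
      using reals_Archimedean[OF w_pos] by blast
    then show "x \<in> (\<Union>k. {x. 1 / real (Suc k) \<le> w x})"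
      by (intro UN_I[of k]) (auto simp: inverse_eq_divide)
  qed
  have "ball (0::'a) (1 / 8) \<notin> null_sets lebesgue"
    by (rule ball_not_null_sets) simp
  from not_null_sets_Int_UN[OF this _ cover]
  obtain k where "ball 0 (1 / 8) \<inter> {x. 1 / real (Suc k) \<le> w x} \<notin> null_sets lebesgue"
    using level_sets_lebesgue(3) by blast
  then show ?thesis
    by (intro that[of "1 / real (Suc k)"]) (auto simp: Int_commute)
qed

text \<open>If \<open>{w > K}\<close> filled more than half of some unit ball, testing it against a fixed piece of
  \<open>{w \<le> K\<^sub>1}\<close> would bound \<open>K\<close> from above.\<close>
lemma sublevel_set_half_dense:
  obtains K where "0 < K" "half_dense {x. w x \<le> K}"
proof -
  obtain K1 where "0 < K1" and not_null: "{x. w x \<le> K1} \<inter> ball 0 (1 / 8) \<notin> null_sets lebesgue"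
    by (rule sublevel_set_not_null)
  define E where "E = {x. w x \<le> K1} \<inter> ball (0::'a) (1 / 8)"
  have E: "E \<in> sets lebesgue" "E \<subseteq> cball 0 (1 / 8)" "0 < measure lebesgue E"
    using measure_Int_ball_pos_of_not_null_sets[OF level_sets_lebesgue(1) not_null] level_sets_lebesgue(1)
    by (auto simp: E_def)
  define h where "h = measure lebesgue (ball (0::'a) 1) / 2"
  define X where "X = measure lebesgue E powr (1 - pinv) * h powr qinv"
  define K where "K = 2 * C * K1 / X + 1"
  have "0 < h" "0 < X"
    using E(3) measure_ball_pos[of 1 "0::'a"] by (simp_all add: h_def X_def)
  moreover have "0 < K"
    using C_pos \<open>0 < K1\<close> \<open>0 < X\<close> by (simp add: K_def add_nonneg_pos)
  ultimately have "2 * C * K1 / K < X"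
    by (simp add: K_def field_simps)
  have "measure lebesgue (ball y 1) / 2 \<le> measure lebesgue ({x. w x \<le> K} \<inter> ball y 1)" for y
  proof -
    let ?F = "{x. K < w x} \<inter> ball y 1"
    have "measure lebesgue ?F \<le> h"
    proof (rule ccontr)
      assume "\<not> measure lebesgue ?F \<le> h"
      then have "X \<le> measure lebesgue E powr (1 - pinv) * measure lebesgue ?F powr qinv"
        unfolding X_def using \<open>0 < h\<close> by (intro mult_left_mono powr_mono2) (auto simp: inv_exponent_nonneg)
      also have "\<dots> \<le> 2 * C * K1 / K"
      proof (rule level_sets_estimate[OF E])
        show "?F \<in> sets lebesgue"
          by (intro sets.Int level_sets_lebesgue(4)) simp
        show "?F \<subseteq> cball y (1 / (8 * (1 / 8)))"
          by auto
      qed (use \<open>0 < K\<close> in \<open>auto simp: E_def\<close>)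
      finally show False
        using \<open>2 * C * K1 / K < X\<close> by simp
    qed
    moreover have "ball y 1 - {x. w x \<le> K} = ?F"
      by auto
    ultimately show ?thesis
      using measure_Int_ge_of_measure_Diff_le[OF lmeasurable_ball level_sets_lebesgue(1), of y 1 K h]
      by (simp add: h_def content_ball)
  qed
  then show ?thesis
    using \<open>0 < K\<close> that by (simp add: half_dense_def)
qed

lemma superlevel_set_half_dense:
  obtains \<eta> where "0 < \<eta>" "half_dense {x. \<eta> \<le> w x}"
proof -
  obtain \<eta>1 where "0 < \<eta>1" and not_null: "{x. \<eta>1 \<le> w x} \<inter> ball 0 (1 / 8) \<notin> null_sets lebesgue"
    by (rule superlevel_set_not_null)
  define F where "F = {x. \<eta>1 \<le> w x} \<inter> ball (0::'a) (1 / 8)"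
  have F: "F \<in> sets lebesgue" "F \<subseteq> cball 0 (1 / (8 * 1))" "0 < measure lebesgue F"
    using measure_Int_ball_pos_of_not_null_sets[OF level_sets_lebesgue(3) not_null] level_sets_lebesgue(3)
    by (auto simp: F_def)
  define h where "h = measure lebesgue (ball (0::'a) 1) / 2"
  define X where "X = h powr (1 - pinv) * measure lebesgue F powr qinv"
  define \<eta> where "\<eta> = \<eta>1 * X / (4 * C)"
  have "0 < h" "0 < X"
    using F(3) measure_ball_pos[of 1 "0::'a"] by (simp_all add: h_def X_def)
  then have "0 < \<eta>" "2 * C * \<eta> / \<eta>1 < X"
    using C_pos \<open>0 < \<eta>1\<close> by (simp_all add: \<eta>_def field_simps)
  have "measure lebesgue (ball y 1) / 2 \<le> measure lebesgue ({x. \<eta> \<le> w x} \<inter> ball y 1)" for y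
  proof -
    let ?E = "{x. w x < \<eta>} \<inter> ball y 1"
    have "measure lebesgue ?E \<le> h"
    proof (rule ccontr)
      assume "\<not> measure lebesgue ?E \<le> h"
      then have "X \<le> measure lebesgue ?E powr (1 - pinv) * measure lebesgue F powr qinv"
        unfolding X_def using \<open>0 < h\<close> inv_exponent_le_1[OF p]
        by (intro mult_right_mono powr_mono2) auto
      also have "\<dots> \<le> 2 * C * \<eta> / \<eta>1"
      proof (rule level_sets_estimate[OF _ _ _ _ _ F(1,2) \<open>0 < \<eta>1\<close>])
        show "?E \<in> sets lebesgue"
          by (intro sets.Int level_sets_lebesgue(2)) simp
        show "?E \<subseteq> cball y 1"
          by auto
        show "0 < measure lebesgue ?E"
          using \<open>0 < h\<close> \<open>\<not> measure lebesgue ?E \<le> h\<close> by linarith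
      qed (auto simp: F_def)
      finally show False
        using \<open>2 * C * \<eta> / \<eta>1 < X\<close> by simp
    qed
    moreover have "ball y 1 - {x. \<eta> \<le> w x} = ?E"
      by auto
    ultimately show ?thesis
      using measure_Int_ge_of_measure_Diff_le[OF lmeasurable_ball level_sets_lebesgue(3), of y 1 \<eta> h]
      by (simp add: h_def content_ball)
  qed
  then show ?thesis
    using \<open>0 < \<eta>\<close> that by (simp add: half_dense_def)
qed

lemma inv_exponent_sum_le_1: "pinv + qinv \<le> 1"
proof -
  obtain K where "0 < K" and not_null: "{x. w x \<le> K} \<inter> ball 0 (1 / 8) \<notin> null_sets lebesgue"
    by (rule sublevel_set_not_null)
  let ?S = "{x. w x \<le> K} \<inter> ball (0::'a) (1 / 8)"
  have "?S \<in> sets lebesgue"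
    by (intro sets.Int level_sets_lebesgue(1)) simp
  then obtain x0 r0 e0 where "0 < r0" "0 < e0" and dense:
    "\<And>d. 0 < d \<Longrightarrow> d \<le> r0 \<Longrightarrow> e0 * measure lebesgue (ball x0 d) \<le> measure lebesgue (?S \<inter> ball x0 d)"
    by (rule positive_lower_density_point[OF _ not_null]) blast+
  obtain \<eta> where "0 < \<eta>" and half: "half_dense {x. \<eta> \<le> w x}"
    by (rule superlevel_set_half_dense)
  define \<kappa> where "\<kappa> = (e0 * unit_ball_vol DIM('a)) powr (1 - pinv)
    * (1 / 2 ^ (DIM('a) + 1) * unit_ball_vol DIM('a) / 8 ^ DIM('a)) powr qinv"
  have "0 < \<kappa>"
    unfolding \<kappa>_def using \<open>0 < e0\<close> by (intro mult_pos_pos) (simp_all add: unit_ball_vol_neq_0)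
  have "d powr (DIM('a) * (1 - pinv - qinv)) \<le> 2 * C * K / \<eta> / \<kappa>"
    if "0 < d" "d \<le> min r0 (1 / 16)" for d
  proof -
    have "\<kappa> * d powr (DIM('a) * (1 - pinv - qinv)) \<le> 2 * C * K / \<eta>"
      unfolding \<kappa>_def
    proof (rule scaled_level_sets_estimate[OF \<open>0 < d\<close> _ _ _ _ \<open>0 < e0\<close> _ _ _ _ _ \<open>0 < \<eta>\<close>])
      show "?S \<inter> ball x0 d \<in> sets lebesgue"
        by (rule sets.Int[OF \<open>?S \<in> sets lebesgue\<close>]) simp
      show "e0 * measure lebesgue (ball x0 d) \<le> measure lebesgue (?S \<inter> ball x0 d)"
        using that by (intro dense) auto
      show "{x. \<eta> \<le> w x} \<inter> ball 0 (1 / (8 * d)) \<in> sets lebesgue"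
        by (intro sets.Int level_sets_lebesgue(3)) simp
      show "1 / 2 ^ (DIM('a) + 1) * measure lebesgue (ball (0::'a) (1 / (8 * d)))
          \<le> measure lebesgue ({x. \<eta> \<le> w x} \<inter> ball 0 (1 / (8 * d)))"
        using half_dense_measure_Int_ball_ge[OF level_sets_lebesgue(3) half] that
        by (simp add: field_simps)
    qed auto
    then show ?thesis
      using \<open>0 < \<kappa>\<close> by (metis pos_le_divide_eq mult.commute)
  qed
  then have "0 \<le> DIM('a) * (1 - pinv - qinv)"
    using \<open>0 < r0\<close> by (intro powr_bounded_at_0_imp_nonneg[of "min r0 (1 / 16)"]) auto
  then show ?thesis
    by (simp add: zero_le_mult_iff)
qed

lemma inv_exponent_sum_ge_1: "1 \<le> pinv + qinv"
proof -
  obtain \<eta> where "0 < \<eta>" and not_null: "{x. \<eta> \<le> w x} \<inter> ball 0 (1 / 8) \<notin> null_sets lebesgue"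
    by (rule superlevel_set_not_null)
  let ?S = "{x. \<eta> \<le> w x} \<inter> ball (0::'a) (1 / 8)"
  have "?S \<in> sets lebesgue"
    by (intro sets.Int level_sets_lebesgue(3)) simp
  then obtain x0 r0 e0 where "0 < r0" "0 < e0" and dense:
    "\<And>d. 0 < d \<Longrightarrow> d \<le> r0 \<Longrightarrow> e0 * measure lebesgue (ball x0 d) \<le> measure lebesgue (?S \<inter> ball x0 d)"
    by (rule positive_lower_density_point[OF _ not_null]) blast+
  obtain K where "0 < K" and half: "half_dense {x. w x \<le> K}"
    by (rule sublevel_set_half_dense)
  define \<kappa> where "\<kappa> = (1 / 2 ^ (DIM('a) + 1) * unit_ball_vol DIM('a)) powr (1 - pinv)
    * (e0 * unit_ball_vol DIM('a) / 8 ^ DIM('a)) powr qinv"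
  have "0 < \<kappa>"
    unfolding \<kappa>_def using \<open>0 < e0\<close> by (intro mult_pos_pos) (simp_all add: unit_ball_vol_neq_0)
  have "R powr (DIM('a) * (1 - pinv - qinv)) \<le> 2 * C * K / \<eta> / \<kappa>"
    if "max 2 (1 / (8 * r0)) \<le> R" for R
  proof -
    have "0 < R" "1 / (8 * R) \<le> r0"
      using that \<open>0 < r0\<close> by (auto simp: field_simps)
    have "\<kappa> * R powr (DIM('a) * (1 - pinv - qinv)) \<le> 2 * C * K / \<eta>"
      unfolding \<kappa>_def
    proof (rule scaled_level_sets_estimate[OF \<open>0 < R\<close> _ _ _ _ _ _ _ _ _ \<open>0 < e0\<close> \<open>0 < \<eta>\<close>])
      show "{x. w x \<le> K} \<inter> ball 0 R \<in> sets lebesgue"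
        by (intro sets.Int level_sets_lebesgue(1)) simp
      show "1 / 2 ^ (DIM('a) + 1) * measure lebesgue (ball (0::'a) R) \<le> measure lebesgue ({x. w x \<le> K} \<inter> ball 0 R)"
        using half_dense_measure_Int_ball_ge[OF level_sets_lebesgue(1) half, of R 0] that by simp
      show "?S \<inter> ball x0 (1 / (8 * R)) \<in> sets lebesgue"
        by (rule sets.Int[OF \<open>?S \<in> sets lebesgue\<close>]) simp
      show "e0 * measure lebesgue (ball x0 (1 / (8 * R))) \<le> measure lebesgue (?S \<inter> ball x0 (1 / (8 * R)))"
        using \<open>0 < R\<close> \<open>1 / (8 * R) \<le> r0\<close> by (intro dense) auto
    qed auto
    then show ?thesis
      using \<open>0 < \<kappa>\<close> by (metis pos_le_divide_eq mult.commute)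
  qed
  then have "DIM('a) * (1 - pinv - qinv) \<le> 0"
    by (rule powr_bounded_at_top_imp_nonpos)
  then show ?thesis
    by (simp add: mult_le_0_iff)
qed

lemma inv_exponent_sum_eq_1: "pinv + qinv = 1"
  using inv_exponent_sum_le_1 inv_exponent_sum_ge_1 by simp

text \<open>Once \<open>1/p + 1/q = 1\<close> the estimate is dilation invariant, so a small ball in which
  \<open>{w < m}\<close> has density above \<open>1/2\<close>, paired with a large ball in \<open>{w \<ge> \<eta>}\<close>, would bound \<open>m\<close>
  from below.\<close>
lemma AE_ge_const:
  obtains m where "0 < m" "AE x in lebesgue. m \<le> w x"
proof -
  obtain \<eta> where "0 < \<eta>" and half: "half_dense {x. \<eta> \<le> w x}"
    by (rule superlevel_set_half_dense)
  define \<kappa> where "\<kappa> = (1 / 2 * unit_ball_vol DIM('a)) powr (1 - pinv)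
    * (1 / 2 ^ (DIM('a) + 1) * unit_ball_vol DIM('a) / 8 ^ DIM('a)) powr qinv"
  define m where "m = \<kappa> * \<eta> / (4 * C)"
  have "0 < \<kappa>"
    unfolding \<kappa>_def by (intro mult_pos_pos) (simp_all add: unit_ball_vol_neq_0)
  then have "0 < m"
    using \<open>0 < \<eta>\<close> C_pos by (simp add: m_def)
  have "{x. w x < m} \<in> null_sets lebesgue"
  proof (rule null_sets_of_relative_density_le[where \<theta> = "1 / 2"])
    fix x and r :: real
    assume "0 < r"
    define d where "d = min r (1 / 16)"
    have "0 < d" "d \<le> r" "2 \<le> 1 / (8 * d)"
      using \<open>0 < r\<close> by (auto simp: d_def field_simps)
    have "measure lebesgue ({x. w x < m} \<inter> ball x d) \<le> 1 / 2 * measure lebesgue (ball x d)"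
    proof (rule ccontr)
      assume dense: "\<not> ?thesis"
      have "\<kappa> * d powr (DIM('a) * (1 - pinv - qinv)) \<le> 2 * C * m / \<eta>"
        unfolding \<kappa>_def
      proof (rule scaled_level_sets_estimate[OF \<open>0 < d\<close> _ _ _ _ _ _ _ _ _ _ \<open>0 < \<eta>\<close>])
        show "{x. w x < m} \<inter> ball x d \<in> sets lebesgue"
          by (rule sets.Int[OF level_sets_lebesgue(2)]) simp
        show "{x. \<eta> \<le> w x} \<inter> ball 0 (1 / (8 * d)) \<in> sets lebesgue"
          by (rule sets.Int[OF level_sets_lebesgue(3)]) simp
        show "1 / 2 ^ (DIM('a) + 1) * measure lebesgue (ball (0::'a) (1 / (8 * d)))
            \<le> measure lebesgue ({x. \<eta> \<le> w x} \<inter> ball 0 (1 / (8 * d)))"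
          using half_dense_measure_Int_ball_ge[OF level_sets_lebesgue(3) half \<open>2 \<le> 1 / (8 * d)\<close>, of 0]
          by simp
      qed (use dense in auto)
      moreover have "d powr (DIM('a) * (1 - pinv - qinv)) = 1"
        using inv_exponent_sum_eq_1 \<open>0 < d\<close> by (simp add: diff_diff_eq)
      moreover have "2 * C * m / \<eta> = \<kappa> / 2"
        using C_pos \<open>0 < \<eta>\<close> by (simp add: m_def field_simps)
      ultimately show False
        using \<open>0 < \<kappa>\<close> by simp
    qed
    then show "\<exists>d. 0 < d \<and> d \<le> r \<and>
        measure lebesgue ({x. w x < m} \<inter> ball x d) \<le> 1 / 2 * measure lebesgue (ball x d)"
      using \<open>0 < d\<close> \<open>d \<le> r\<close> by blast
  qed (simp_all add: level_sets_lebesgue)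
  from AE_not_in[OF this] have "AE x in lebesgue. m \<le> w x"
    by eventually_elim auto
  with \<open>0 < m\<close> show ?thesis
    by (rule that)
qed

lemma AE_le_const:
  obtains M where "0 < M" "AE x in lebesgue. w x \<le> M"
proof -
  obtain K where "0 < K" and half: "half_dense {x. w x \<le> K}"
    by (rule sublevel_set_half_dense)
  define \<kappa> where "\<kappa> = (1 / 2 ^ (DIM('a) + 1) * unit_ball_vol DIM('a)) powr (1 - pinv)
    * (1 / 2 * unit_ball_vol DIM('a) / 8 ^ DIM('a)) powr qinv"
  define M where "M = 4 * C * K / \<kappa>"
  have "0 < \<kappa>"
    unfolding \<kappa>_def by (intro mult_pos_pos) (simp_all add: unit_ball_vol_neq_0)
  then have "0 < M"
    using \<open>0 < K\<close> C_pos by (simp add: M_def)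
  have "{x. M < w x} \<in> null_sets lebesgue"
  proof (rule null_sets_of_relative_density_le[where \<theta> = "1 / 2"])
    fix x and r :: real
    assume "0 < r"
    define d where "d = min r (1 / 16)"
    define R where "R = 1 / (8 * d)"
    have "0 < d" "d \<le> r" "2 \<le> R" "0 < R" "1 / (8 * R) = d"
      using \<open>0 < r\<close> by (auto simp: d_def R_def field_simps)
    have "measure lebesgue ({x. M < w x} \<inter> ball x d) \<le> 1 / 2 * measure lebesgue (ball x d)"
    proof (rule ccontr)
      assume dense: "\<not> ?thesis"
      have "\<kappa> * R powr (DIM('a) * (1 - pinv - qinv)) \<le> 2 * C * K / M"
        unfolding \<kappa>_def
      proof (rule scaled_level_sets_estimate[OF \<open>0 < R\<close>])
        show "{x. w x \<le> K} \<inter> ball 0 R \<in> sets lebesgue"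
          by (rule sets.Int[OF level_sets_lebesgue(1)]) simp
        show "1 / 2 ^ (DIM('a) + 1) * measure lebesgue (ball (0::'a) R)
            \<le> measure lebesgue ({x. w x \<le> K} \<inter> ball 0 R)"
          using half_dense_measure_Int_ball_ge[OF level_sets_lebesgue(1) half \<open>2 \<le> R\<close>, of 0]
          by simp
        show "{x. M < w x} \<inter> ball x d \<in> sets lebesgue"
          by (rule sets.Int[OF level_sets_lebesgue(4)]) simp
      qed (use dense \<open>1 / (8 * R) = d\<close> \<open>0 < M\<close> in auto)
      moreover have "R powr (DIM('a) * (1 - pinv - qinv)) = 1"
        using inv_exponent_sum_eq_1 \<open>0 < R\<close> by (simp add: diff_diff_eq)
      moreover have "2 * C * K / M = \<kappa> / 2"
        using C_pos \<open>0 < K\<close> \<open>0 < \<kappa>\<close> by (simp add: M_def field_simps)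
      ultimately show False
        using \<open>0 < \<kappa>\<close> by simp
    qed
    then show "\<exists>d. 0 < d \<and> d \<le> r \<and>
        measure lebesgue ({x. M < w x} \<inter> ball x d) \<le> 1 / 2 * measure lebesgue (ball x d)"
      using \<open>0 < d\<close> \<open>d \<le> r\<close> by blast
  qed (simp_all add: level_sets_lebesgue)
  from AE_not_in[OF this] have "AE x in lebesgue. w x \<le> M"
    by eventually_elim auto
  with \<open>0 < M\<close> show ?thesis
    by (rule that)
qed

lemma bump_sum_estimate:
  fixes u :: 'a
  assumes "q \<noteq> \<infinity>" "1 \<le> N" "norm u = 1"
    and "0 < m" "AE x in lebesgue. m \<le> w x" and "0 < M" "AE x in lebesgue. w x \<le> M"
  shows "m * (measure lebesgue (ball (0::'a) (1 / 8)) / 2) * (real N * measure lebesgue (ball (0::'a) 1) / 2) powr qinv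
    \<le> C * M * (real N * measure lebesgue (ball (0::'a) (1 / 8))) powr pinv"
proof -
  let ?s = "enn2real q" and ?e = "measure lebesgue (ball (0::'a) (1 / 8))"
    and ?\<omega> = "measure lebesgue (ball (0::'a) 1)" and ?E = "\<Union>k<N. ball (bump_centre u k) (1 / 8)"
  have "1 \<le> ?s" "qinv = 1 / ?s"
    using enn2real_ge_1[OF q assms(1)] assms(1) by (simp_all add: inv_exponent_def)
  have "0 < ?e" "0 < ?\<omega>"
    by (simp_all add: measure_ball_pos)
  obtain \<theta> where \<theta>: "\<theta> \<in> sign_vectors N" and big:
    "ennreal ((?e / 2) powr ?s / 2 * (real N * ?\<omega>)) \<le> (\<integral>\<^sup>+x. ennreal (norm (fourier (bump_sum u N \<theta>) x) powr ?s) \<partial>lebesgue)"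
    using exists_sign_vector_fourier_bump_sum_ge[OF assms(3) \<open>1 \<le> ?s\<close>] by blast
  have E: "?E \<in> lmeasurable"
    by (intro bounded_set_imp_lmeasurable bounded_UN sets.countable_UN') auto
  have "ball (bump_centre u 0) (1 / 8) \<subseteq> ?E"
    using assms(2) by (intro UN_upper) auto
  then have "measure lebesgue (ball (bump_centre u 0) (1 / 8)) \<le> measure lebesgue ?E"
    using E by (intro measure_mono_fmeasurable) auto
  then have "0 < measure lebesgue ?E"
    using measure_ball_pos[of "1 / 8" "bump_centre u 0"] by linarith
  have "measure lebesgue ?E \<le> (\<Sum>k<N. measure lebesgue (ball (bump_centre u k) (1 / 8)))"
    by (intro measure_UNION_le) auto
  also have "\<dots> = real N * ?e"
    by (simp add: content_ball)
  finally have "measure lebesgue ?E \<le> real N * ?e" .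
  have "AE x in lebesgue. norm (w x *\<^sub>R bump_sum u N \<theta> x) \<le> M * indicator ?E x"
    using assms(7)
  proof eventually_elim
    case (elim x)
    then show ?case
      using norm_bump_sum_le[OF assms(3) \<theta>, of x] w_pos[of x] \<open>0 < M\<close> by (auto intro: mult_mono)
  qed
  then have upper: "Lp_norm p (\<lambda>x. w x *\<^sub>R bump_sum u N \<theta> x) \<le> ennreal (M * measure lebesgue ?E powr pinv)"
    using \<open>0 < M\<close> by (intro Lp_norm_le_indicator_bound[OF p borel_measurable_scaleR[OF w_measurable
      bump_sum_measurable] E \<open>0 < measure lebesgue ?E\<close>]) auto
  have "ennreal (m * ((?e / 2) powr ?s / 2 * (real N * ?\<omega>)) powr (1 / ?s))
      \<le> Lp_norm q (\<lambda>x. w x *\<^sub>R fourier (bump_sum u N \<theta>) x)"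
    using big \<open>0 < ?e\<close> \<open>0 < ?\<omega>\<close>
    by (intro Lp_norm_weighted_ge[OF q assms(1) fourier_measurable[OF bump_sum_measurable] assms(4,5)]) auto
  also have "\<dots> \<le> ennreal C * Lp_norm p (\<lambda>x. w x *\<^sub>R bump_sum u N \<theta> x)"
    using le_less_trans[OF upper ennreal_less_top] by (intro inequality integrable_bump_sum) simp
  also have "\<dots> \<le> ennreal C * ennreal (M * measure lebesgue ?E powr pinv)"
    by (rule mult_left_mono[OF upper]) simp
  also have "\<dots> = ennreal (C * (M * measure lebesgue ?E powr pinv))"
    using C_pos \<open>0 < M\<close> by (simp add: ennreal_mult)
  finally have "m * ((?e / 2) powr ?s / 2 * (real N * ?\<omega>)) powr (1 / ?s) \<le> C * M * measure lebesgue ?E powr pinv"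
    using C_pos \<open>0 < M\<close> by (simp add: mult.assoc)
  also have "\<dots> \<le> C * M * (real N * ?e) powr pinv"
    using \<open>measure lebesgue ?E \<le> real N * ?e\<close> \<open>0 < measure lebesgue ?E\<close> C_pos \<open>0 < M\<close> inv_exponent_nonneg
    by (intro mult_left_mono powr_mono2) auto
  also have "((?e / 2) powr ?s / 2 * (real N * ?\<omega>)) powr (1 / ?s) = ?e / 2 * (real N * ?\<omega> / 2) powr qinv"
  proof -
    have "((?e / 2) powr ?s / 2 * (real N * ?\<omega>)) powr (1 / ?s)
        = ((?e / 2) powr ?s) powr (1 / ?s) * (real N * ?\<omega> / 2) powr (1 / ?s)"
      using \<open>0 < ?e\<close> \<open>0 < ?\<omega>\<close> by (subst powr_mult[symmetric]) auto
    also have "((?e / 2) powr ?s) powr (1 / ?s) = ?e / 2"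
      using \<open>1 \<le> ?s\<close> \<open>0 < ?e\<close> by (simp add: powr_powr)
    finally show ?thesis
      using \<open>qinv = 1 / ?s\<close> by simp
  qed
  finally show ?thesis
    by (simp add: mult.assoc)
qed

text \<open>With \<open>N\<close> bumps, \<open>\<parallel>w f\<parallel>\<^sub>p\<close> grows like \<open>N\<^sup>1\<^sup>/\<^sup>p\<close> while \<open>\<parallel>w f\<^sup>^\<parallel>\<^sub>q\<close> grows like
  \<open>N\<^sup>1\<^sup>/\<^sup>q\<close> for a suitable choice of signs.\<close>
lemma inv_exponent_p_ge_half: "1 / 2 \<le> pinv"
proof (cases "q = \<infinity>")
  case True
  then show ?thesis
    using inv_exponent_sum_eq_1 by (simp add: inv_exponent_def)
next
  case False
  obtain m where "0 < m" and m: "AE x in lebesgue. m \<le> w x"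
    by (rule AE_ge_const)
  obtain M where "0 < M" and M: "AE x in lebesgue. w x \<le> M"
    by (rule AE_le_const)
  obtain u :: 'a where "norm u = 1"
    using norm_Basis[OF SOME_Basis] by blast
  let ?e = "measure lebesgue (ball (0::'a) (1 / 8))" and ?\<omega> = "measure lebesgue (ball (0::'a) 1)"
  define A where "A = m * (?e / 2) * (?\<omega> / 2) powr qinv"
  define B where "B = C * M * ?e powr pinv"
  have "0 < A"
    using \<open>0 < m\<close> by (simp add: A_def measure_ball_pos)
  have "real N powr (qinv - pinv) \<le> B / A" if "1 \<le> N" for N :: nat
  proof -
    have "(real N * ?\<omega> / 2) powr qinv = real N powr qinv * (?\<omega> / 2) powr qinv"
      by (subst powr_mult[symmetric]) (auto simp: measure_ball_pos less_imp_le)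
    moreover have "(real N * ?e) powr pinv = real N powr pinv * ?e powr pinv"
      by (simp add: powr_mult)
    ultimately have "A * real N powr qinv \<le> B * real N powr pinv"
      using bump_sum_estimate[OF False that \<open>norm u = 1\<close> \<open>0 < m\<close> m \<open>0 < M\<close> M]
      by (simp add: A_def B_def ac_simps)
    then show ?thesis
      using \<open>0 < A\<close> that by (simp add: powr_diff field_simps)
  qed
  then have "qinv - pinv \<le> 0"
    by (rule powr_bounded_sequentially_imp_nonpos)
  then show ?thesis
    using inv_exponent_sum_eq_1 by simp
qed

end

theorem theorem2p6:
  fixes p q :: ennreal and w :: "'a::euclidean_space \<Rightarrow> real"
  assumes "1 \<le> p" and "1 \<le> q"
    and "w \<in> borel_measurable lebesgue"
    and "\<And>x. w x > 0"
    and "\<exists>C::real. \<forall>f :: 'a \<Rightarrow> complex.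
           integrable lebesgue f \<and> Lp_norm p (\<lambda>x. w x *\<^sub>R f x) < \<infinity> \<longrightarrow>
           Lp_norm q (\<lambda>x. w x *\<^sub>R fourier f x) \<le> ennreal C * Lp_norm p (\<lambda>x. w x *\<^sub>R f x)"
  shows "1 \<le> p \<and> p \<le> 2 \<and> 1 / p + 1 / q = 1 \<and>
         (\<exists>m M::real. 0 < m \<and> 0 < M \<and> (AE x in lebesgue. m \<le> w x \<and> w x \<le> M))"
proof -
  obtain C where C: "\<And>f :: 'a \<Rightarrow> complex. integrable lebesgue f \<Longrightarrow> Lp_norm p (\<lambda>x. w x *\<^sub>R f x) < \<infinity> \<Longrightarrow>
      Lp_norm q (\<lambda>x. w x *\<^sub>R fourier f x) \<le> ennreal C * Lp_norm p (\<lambda>x. w x *\<^sub>R f x)"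
    using assms(5) by blast
  interpret weighted_fourier_inequality p q w "max C 1"
  proof
    fix f :: "'a \<Rightarrow> complex"
    assume "integrable lebesgue f" "Lp_norm p (\<lambda>x. w x *\<^sub>R f x) < \<infinity>"
    then have "Lp_norm q (\<lambda>x. w x *\<^sub>R fourier f x) \<le> ennreal C * Lp_norm p (\<lambda>x. w x *\<^sub>R f x)"
      by (rule C)
    also have "\<dots> \<le> ennreal (max C 1) * Lp_norm p (\<lambda>x. w x *\<^sub>R f x)"
      by (intro mult_right_mono ennreal_leI) auto
    finally show "Lp_norm q (\<lambda>x. w x *\<^sub>R fourier f x) \<le> ennreal (max C 1) * Lp_norm p (\<lambda>x. w x *\<^sub>R f x)" .
  qed (use assms(1-4) in auto)
  obtain m M where "0 < m" "AE x in lebesgue. m \<le> w x" "0 < M" "AE x in lebesgue. w x \<le> M"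
    using AE_ge_const AE_le_const by metis
  then have "\<exists>m M::real. 0 < m \<and> 0 < M \<and> (AE x in lebesgue. m \<le> w x \<and> w x \<le> M)"
    by (auto elim!: eventually_rev_mp)
  moreover have "1 / p + 1 / q = 1"
    using inv_exponent_sum_eq_1 inv_exponent_nonneg[of p] inv_exponent_nonneg[of q]
    by (simp add: ennreal_inv_exponent[OF assms(1)] ennreal_inv_exponent[OF assms(2)] flip: ennreal_plus)
  ultimately show ?thesis
    using assms(1) le_2_of_inv_exponent_ge_half[OF assms(1) inv_exponent_p_ge_half] by blast
qed

end
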